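(* Fix $k\in\mathbb{Z}_{\geq0}$. For integers $0\leq i\leq r\leq k$, in $\mathcal{A}_k$ we have $$s_{(r-i,1^i)}=\underline{V_i^r}+\sum_{j=0}^{i-1}(-1)^j\,\underline{U^r_{i-j-1,wc}}+\underline{U^r_{i-1,\overline{wc},\mathrm{left}}}.$$
   Context: Indices are elements of $\mathbb{Z}/(k+1)\mathbb{Z}$, identified with $[0,k]$. $\mathcal{A}_k$ is the associative $\mathbb{Z}$-algebra with generators $A_0,\dots,A_k$ subject only to $A_iA_{i+1}A_i=A_{i+1}A_iA_{i+1}$ for all $i$ and $A_iA_j=A_jA_i$ whenever $i-j\not\equiv\pm1\pmod{k+1}$. A word $A_{i_1\dots i_m}$ is a sequence of indices with value $A_{i_1}\cdots A_{i_m}$, weak length $m$ and support $\{i_1,\dots,i_m\}$. For a proper subset $A\subsetneq[0,k]$ with $|A|=s$, $d_A=A_{i_1\dots i_s}$ and $i_A=A_{i_s\dots i_1}$, where $(i_1,\dots,i_s)$ is any ordering of $A$ such that whenever $i,i+1\in A$, $i+1$ occurs before $i$ ($d_\emptyset=i_\emptyset=1$). Define $h_s=\sum_{A\in\binom{[0,k]}{s}}d_A$, $e_s=\sum_{A\in\binom{[0,k]}{s}}i_A$, and $s_{(r-i,1^i)}=\sum_{j=0}^i(-1)^jh_{r-i+j}e_{i-j}$. For a proper subset $S$, with $a$ the smallest element of $[0,k]$ not in $S$, $I_S$ is the total order $a+1<\dots<k<0<\dots<a-1$. A word $u=A_{i_1\dots i_m}$ with proper support is a weak hook word of hook type $V$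 (resp. $U$) if with respect to $I_{supp(u)}$, for some $j$, $i_1>\dots>i_j<i_{j+1}<\dots<i_m$ with left side $i_1,\dots,i_j$ and right side $i_j,\dots,i_m$ (resp. $i_1>\dots>i_j=i_{j+1}<\dots<i_m$ with left side $i_1,\dots,i_j$ and right side $i_{j+1},\dots,i_m$). $asc(u)$ is the number of $t$ with $i_t<i_{t+1}$. $u$ is $k$-connected if $supp(u)$ is an interval of $I_{supp(u)}$. Otherwise, among pairs of letters $a<c$ of $u$ with $a\not\equiv c-1\pmod{k+1}$ and no letter $b$ of $u$ with $a<b<c$, let $u_{min}$ be the smallest such $c$; it occurs once or twice (if twice, once on each side). $u$ is $k$-weak connected if it is $k$-connected or $u_{min}$ occurs twice. $X^r_i$ ($X\in\{U,V\}$) is the set of weak hook words of type $X$, length $r$, $asc=i$; $X^r_{i,wc}$ its subset of $k$-weak connected words; $X^r_{i,\overline{wc},\mathrm{left}}$ its subset of words not $k$-weak connected whose single occurrence of $u_{min}$ lies on the left side. For a finite set $S$ of words, $\underline{S}=\sum_{u\in S}u\in\mathcal{A}_k$. *)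

theory Defs
  imports Main
begin

text \<open>Elements of the free associative Z-algebra on letters (indices) are represented
  as functions from words (nat lists) to their integer coefficients (finitely supported
  for all elements we construct). Equality in A_k is equality modulo the two-sided ideal
  generated by the defining relations.\<close>

type_synonym felem = "nat list \<Rightarrow> int"

definition wd :: "nat list \<Rightarrow> felem" where
  "wd u = (\<lambda>w. if w = u then 1 else 0)"

definition fmul :: "felem \<Rightarrow> felem \<Rightarrow> felem" where
  "fmul p q = (\<lambda>w. \<Sum>n\<le>length w. p (take n w) * q (drop n w))"

text \<open>underline S: sum of the words in S\<close>
definition Ind :: "nat list set \<Rightarrow> felem" where
  "Ind S = (\<lambda>w. if w \<in> S then 1 else 0)"

definition cadj :: "nat \<Rightarrow> nat \<Rightarrow> nat \<Rightarrow> bool" where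
  "cadj k i j \<longleftrightarrow> j = (i + 1) mod (k + 1) \<or> i = (j + 1) mod (k + 1)"

definition rels :: "nat \<Rightarrow> (nat list \<times> nat list) set" where
  "rels k = {([i, (i+1) mod (k+1), i], [(i+1) mod (k+1), i, (i+1) mod (k+1)]) | i. i \<le> k}
          \<union> {([i, j], [j, i]) | i j. i \<le> k \<and> j \<le> k \<and> \<not> cadj k i j}"

inductive_set relideal :: "nat \<Rightarrow> felem set" for k where
  zero: "(\<lambda>_. 0) \<in> relideal k"
| add: "p \<in> relideal k \<Longrightarrow> q \<in> relideal k \<Longrightarrow> (\<lambda>w. p w + q w) \<in> relideal k"
| neg: "p \<in> relideal k \<Longrightarrow> (\<lambda>w. - p w) \<in> relideal k"
| gen: "(l, r) \<in> rels k \<Longrightarrow> set u \<subseteq> {0..k} \<Longrightarrow> set v \<subseteq> {0..k} \<Longrightarrow>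
        (\<lambda>w. wd (u @ l @ v) w - wd (u @ r @ v) w) \<in> relideal k"

definition Aeq :: "nat \<Rightarrow> felem \<Rightarrow> felem \<Rightarrow> bool" where
  "Aeq k p q \<longleftrightarrow> (\<lambda>w. p w - q w) \<in> relideal k"

text \<open>d_A for a proper subset A of [0,k]: some ordering where i+1 comes before i
  whenever both i and i+1 (mod k+1) lie in A (any such choice gives the same element of A_k).\<close>
definition dword :: "nat \<Rightarrow> nat set \<Rightarrow> nat list" where
  "dword k A = (SOME xs. distinct xs \<and> set xs = A \<and>
     (\<forall>p q. p < length xs \<and> q < length xs \<and> q \<noteq> p \<and> xs ! q = (xs ! p + 1) mod (k + 1)
        \<longrightarrow> q < p))"

definition iword :: "nat \<Rightarrow> nat set \<Rightarrow> nat list" where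
  "iword k A = rev (dword k A)"

definition hh :: "nat \<Rightarrow> nat \<Rightarrow> felem" where
  "hh k s = (\<lambda>w. \<Sum>A\<in>{A. A \<subseteq> {0..k} \<and> card A = s}. wd (dword k A) w)"

definition ee :: "nat \<Rightarrow> nat \<Rightarrow> felem" where
  "ee k s = (\<lambda>w. \<Sum>A\<in>{A. A \<subseteq> {0..k} \<and> card A = s}. wd (iword k A) w)"

definition shook :: "nat \<Rightarrow> nat \<Rightarrow> nat \<Rightarrow> felem" where
  "shook k r i = (\<lambda>w. \<Sum>j\<le>i. (-1) ^ j * fmul (hh k (r - i + j)) (ee k (i - j)) w)"

text \<open>Rank of x in the total order I_S: a+1 < ... < k < 0 < ... < a-1, with a = min of
  complement of S; a itself gets rank k.\<close>
definition rk :: "nat \<Rightarrow> nat set \<Rightarrow> nat \<Rightarrow> nat" where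
  "rk k S x = (x + k - (LEAST a. a \<le> k \<and> a \<notin> S)) mod (k + 1)"

definition properword :: "nat \<Rightarrow> nat list \<Rightarrow> bool" where
  "properword k u \<longleftrightarrow> set u \<subseteq> {0..k} \<and> set u \<noteq> {0..k}"

definition decr :: "nat \<Rightarrow> nat set \<Rightarrow> nat list \<Rightarrow> bool" where
  "decr k S xs \<longleftrightarrow> sorted_wrt (\<lambda>x y. rk k S y < rk k S x) xs"

definition incr :: "nat \<Rightarrow> nat set \<Rightarrow> nat list \<Rightarrow> bool" where
  "incr k S xs \<longleftrightarrow> sorted_wrt (\<lambda>x y. rk k S x < rk k S y) xs"

text \<open>0-indexed valley position p: left side = take (Suc p) u\<close>
definition Vshape :: "nat \<Rightarrow> nat list \<Rightarrow> nat \<Rightarrow> bool" where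
  "Vshape k u p \<longleftrightarrow> decr k (set u) (take (Suc p) u) \<and> incr k (set u) (drop p u)"

definition Ushape :: "nat \<Rightarrow> nat list \<Rightarrow> nat \<Rightarrow> bool" where
  "Ushape k u p \<longleftrightarrow> Suc p < length u \<and> u ! p = u ! Suc p \<and>
     decr k (set u) (take (Suc p) u) \<and> incr k (set u) (drop (Suc p) u)"

definition isV :: "nat \<Rightarrow> nat list \<Rightarrow> bool" where
  "isV k u \<longleftrightarrow> properword k u \<and> (\<exists>p. Vshape k u p)"

definition isU :: "nat \<Rightarrow> nat list \<Rightarrow> bool" where
  "isU k u \<longleftrightarrow> properword k u \<and> (\<exists>p. Ushape k u p)"

definition asc :: "nat \<Rightarrow> nat list \<Rightarrow> nat" where
  "asc k u = card {t. Suc t < length u \<and> rk k (set u) (u ! t) < rk k (set u) (u ! Suc t)}"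

definition kconn :: "nat \<Rightarrow> nat list \<Rightarrow> bool" where
  "kconn k u \<longleftrightarrow> (\<forall>x\<in>set u. \<forall>z\<in>set u. \<forall>y\<le>k.
      rk k (set u) x \<le> rk k (set u) y \<and> rk k (set u) y \<le> rk k (set u) z \<longrightarrow> y \<in> set u)"

definition gapletter :: "nat \<Rightarrow> nat list \<Rightarrow> nat \<Rightarrow> bool" where
  "gapletter k u c \<longleftrightarrow> c \<in> set u \<and> (\<exists>a\<in>set u. rk k (set u) a < rk k (set u) c \<and>
      c \<noteq> (a + 1) mod (k + 1) \<and>
      \<not> (\<exists>b\<in>set u. rk k (set u) a < rk k (set u) b \<and> rk k (set u) b < rk k (set u) c))"

definition umin :: "nat \<Rightarrow> nat list \<Rightarrow> nat \<Rightarrow> bool" where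
  "umin k u c \<longleftrightarrow> gapletter k u c \<and> (\<forall>c'. gapletter k u c' \<longrightarrow> rk k (set u) c \<le> rk k (set u) c')"

definition wconn :: "nat \<Rightarrow> nat list \<Rightarrow> bool" where
  "wconn k u \<longleftrightarrow> kconn k u \<or> (\<exists>c. umin k u c \<and> count_list u c = 2)"

definition Vset :: "nat \<Rightarrow> nat \<Rightarrow> int \<Rightarrow> nat list set" where
  "Vset k r i = {u. isV k u \<and> length u = r \<and> int (asc k u) = i}"

definition Uset :: "nat \<Rightarrow> nat \<Rightarrow> int \<Rightarrow> nat list set" where
  "Uset k r i = {u. isU k u \<and> length u = r \<and> int (asc k u) = i}"

definition Uwc :: "nat \<Rightarrow> nat \<Rightarrow> int \<Rightarrow> nat list set" where
  "Uwc k r i = {u \<in> Uset k r i. wconn k u}"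

definition Unwcleft :: "nat \<Rightarrow> nat \<Rightarrow> int \<Rightarrow> nat list set" where
  "Unwcleft k r i = {u \<in> Uset k r i. \<not> wconn k u \<and>
     (\<exists>c. umin k u c \<and> count_list u c = 1 \<and> (\<exists>p. Ushape k u p \<and> c \<in> set (take (Suc p) u)))}"

end

theory Submission
  imports Defs
begin

(* Commutations of non-adjacent letters reorder any word in which no letter is later followed by
   its successor mod k + 1, and listing a proper subset S decreasingly in the order I_S is such a
   word.  Hence, modulo the relations, d_A i_B is the word listing A decreasingly and then B
   increasingly in I_(A u B), so h_a e_b is the sum of the valley words of length a + b whose first
   a letters decrease and last b letters increase.  Comparing the two letters at the split point,
   a valley word is a V-word with b or b - 1 ascents or a U-word with b - 1 ascents, and the
   alternating sum defining s_(r-i,1^i) telescopes to V_i + sum_j (-1)^j U_(i-j-1).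

   In a U-word that is not weakly connected, u_min occurs once.  If it lies on the right side, it
   commutes with every smaller letter (none is its predecessor, since it closes a gap), so it can
   be moved to the left side without changing the element of A_k; this is a bijection onto the
   left case with one ascent less.  Thus U_t = U_(t,wc) + U_(t,left) + U_(t-1,left), and a second
   telescoping gives the theorem. *)

section \<open>Congruence modulo the defining relations\<close>

lemma Aeq_refl: "Aeq k p p"
  unfolding Aeq_def using relideal.zero[of k] by simp

lemma Aeq_sym: assumes "Aeq k p q" shows "Aeq k q p"
proof -
  have "(\<lambda>w. - (p w - q w)) \<in> relideal k"
    using assms unfolding Aeq_def by (rule relideal.neg)
  then show ?thesis unfolding Aeq_def by simp
qed

lemma Aeq_trans: assumes "Aeq k p q" "Aeq k q s" shows "Aeq k p s"
proof -
  have "(\<lambda>w. (p w - q w) + (q w - s w)) \<in> relideal k"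
    using assms unfolding Aeq_def by (rule relideal.add)
  then show ?thesis unfolding Aeq_def by simp
qed

lemma Aeq_add:
  assumes "Aeq k p q" "Aeq k p' q'"
  shows "Aeq k (\<lambda>w. p w + p' w) (\<lambda>w. q w + q' w)"
proof -
  have "(\<lambda>w. (p w - q w) + (p' w - q' w)) \<in> relideal k"
    using assms unfolding Aeq_def by (rule relideal.add)
  then show ?thesis unfolding Aeq_def by (simp add: algebra_simps)
qed

lemma relideal_smult:
  assumes "p \<in> relideal k" shows "(\<lambda>w. c * p w) \<in> relideal k"
proof -
  have nat_smult: "(\<lambda>w. int n * p w) \<in> relideal k" for n
  proof (induction n)
    case 0
    show ?case using relideal.zero[of k] by simp
  next
    case (Suc n)
    from relideal.add[OF Suc assms] show ?case by (simp add: algebra_simps)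
  qed
  show ?thesis
  proof (cases "c \<ge> 0")
    case True
    then show ?thesis using nat_smult[of "nat c"] by simp
  next
    case False
    then show ?thesis using relideal.neg[OF nat_smult[of "nat (- c)"]] by simp
  qed
qed

lemma Aeq_smult: assumes "Aeq k p q" shows "Aeq k (\<lambda>w. c * p w) (\<lambda>w. c * q w)"
  using relideal_smult[of "\<lambda>w. p w - q w" k c] assms unfolding Aeq_def
  by (simp add: right_diff_distrib)

lemma Aeq_sum:
  assumes "finite I" "\<And>x. x \<in> I \<Longrightarrow> Aeq k (F x) (G x)"
  shows "Aeq k (\<lambda>w. \<Sum>x\<in>I. F x w) (\<lambda>w. \<Sum>x\<in>I. G x w)"
  using assms
proof (induction I rule: finite_induct)
  case empty
  show ?case by (simp add: Aeq_refl)
next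
  case (insert x I)
  then have "Aeq k (\<lambda>w. F x w + (\<Sum>x\<in>I. F x w)) (\<lambda>w. G x w + (\<Sum>x\<in>I. G x w))"
    by (intro Aeq_add) auto
  with insert show ?case by simp
qed

definition rel_step :: "nat \<Rightarrow> nat list \<Rightarrow> nat list \<Rightarrow> bool" where
  "rel_step k x y \<longleftrightarrow> (\<exists>u v l r. ((l, r) \<in> rels k \<or> (r, l) \<in> rels k) \<and>
     set u \<subseteq> {0..k} \<and> set v \<subseteq> {0..k} \<and> x = u @ l @ v \<and> y = u @ r @ v)"

abbreviation rel_conv :: "nat \<Rightarrow> nat list \<Rightarrow> nat list \<Rightarrow> bool" where
  "rel_conv k \<equiv> (rel_step k)\<^sup>*\<^sup>*"

lemma rel_step_Aeq: assumes "rel_step k x y" shows "Aeq k (wd x) (wd y)"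
proof -
  obtain u v l r where lr: "(l, r) \<in> rels k \<or> (r, l) \<in> rels k"
    and uv: "set u \<subseteq> {0..k}" "set v \<subseteq> {0..k}" and xy: "x = u @ l @ v" "y = u @ r @ v"
    using assms unfolding rel_step_def by blast
  from lr show ?thesis
  proof
    assume "(l, r) \<in> rels k"
    from relideal.gen[OF this uv] show ?thesis using xy unfolding Aeq_def by simp
  next
    assume "(r, l) \<in> rels k"
    from relideal.gen[OF this uv] have "Aeq k (wd y) (wd x)" using xy unfolding Aeq_def by simp
    then show ?thesis by (rule Aeq_sym)
  qed
qed

lemma rel_conv_Aeq: "rel_conv k x y \<Longrightarrow> Aeq k (wd x) (wd y)"
  by (induction rule: rtranclp_induct) (auto intro: Aeq_refl Aeq_trans rel_step_Aeq)

lemma rel_step_append: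
  assumes "rel_step k x y" "set p \<subseteq> {0..k}" "set q \<subseteq> {0..k}"
  shows "rel_step k (p @ x @ q) (p @ y @ q)"
proof -
  obtain u v l r where uv: "(l, r) \<in> rels k \<or> (r, l) \<in> rels k" "set u \<subseteq> {0..k}"
    "set v \<subseteq> {0..k}" "x = u @ l @ v" "y = u @ r @ v"
    using assms(1) unfolding rel_step_def by blast
  show ?thesis
    unfolding rel_step_def
    by (rule exI[of _ "p @ u"], rule exI[of _ "v @ q"], rule exI[of _ l], rule exI[of _ r])
      (use uv assms(2,3) in auto)
qed

lemma rel_conv_append:
  assumes "rel_conv k x y" "set p \<subseteq> {0..k}" "set q \<subseteq> {0..k}"
  shows "rel_conv k (p @ x @ q) (p @ y @ q)"
  using assms(1)
proof (induction rule: rtranclp_induct)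
  case (step y z)
  then show ?case by (metis rel_step_append[OF _ assms(2,3)] rtranclp.rtrancl_into_rtrancl)
qed simp

lemma rel_step_rev: assumes "rel_step k x y" shows "rel_step k (rev x) (rev y)"
proof -
  obtain u v l r where lr: "(l, r) \<in> rels k \<or> (r, l) \<in> rels k" and
    uv: "set u \<subseteq> {0..k}" "set v \<subseteq> {0..k}" "x = u @ l @ v" "y = u @ r @ v"
    using assms unfolding rel_step_def by blast
  from lr have "(rev l, rev r) \<in> rels k \<or> (rev r, rev l) \<in> rels k"
    unfolding rels_def cadj_def by auto
  then show ?thesis
    unfolding rel_step_def
    by (rule_tac exI[of _ "rev v"], rule_tac exI[of _ "rev u"], rule_tac exI[of _ "rev l"],
        rule_tac exI[of _ "rev r"]) (use uv in auto)
qed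

lemma rel_conv_rev: "rel_conv k x y \<Longrightarrow> rel_conv k (rev x) (rev y)"
proof (induction rule: rtranclp_induct)
  case (step y z)
  then show ?case by (metis rel_step_rev rtranclp.rtrancl_into_rtrancl)
qed simp

lemma rel_conv_commute:
  assumes "\<forall>x\<in>set xs. x \<le> k \<and> \<not> cadj k x c" "c \<le> k"
  shows "rel_conv k (xs @ [c]) (c # xs)"
  using assms(1)
proof (induction xs)
  case Nil
  show ?case by simp
next
  case (Cons x xs)
  then have "rel_conv k ([x] @ (xs @ [c]) @ []) ([x] @ (c # xs) @ [])"
    by (intro rel_conv_append) auto
  moreover have "([x, c], [c, x]) \<in> rels k"
    using Cons.prems assms(2) unfolding rels_def by auto
  then have "rel_step k ([] @ [x, c] @ xs) ([] @ [c, x] @ xs)"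
    unfolding rel_step_def
    by (rule_tac exI[of _ "[]"], rule_tac exI[of _ xs], rule_tac exI[of _ "[x, c]"],
        rule_tac exI[of _ "[c, x]"]) (use Cons.prems assms(2) in auto)
  ultimately show ?case by (simp add: rtranclp.rtrancl_into_rtrancl)
qed

section \<open>The total order \<open>I\<^sub>S\<close> and monotone words\<close>

definition first_missing :: "nat \<Rightarrow> nat set \<Rightarrow> nat" where
  "first_missing k S = (LEAST a. a \<le> k \<and> a \<notin> S)"

definition proper_set :: "nat \<Rightarrow> nat set \<Rightarrow> bool" where
  "proper_set k S \<longleftrightarrow> S \<subseteq> {0..k} \<and> (\<exists>a\<le>k. a \<notin> S)"

lemma proper_set_subset: "proper_set k S \<Longrightarrow> A \<subseteq> S \<Longrightarrow> proper_set k A"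
  unfolding proper_set_def by blast

lemma proper_set_card: assumes "S \<subseteq> {0..k}" "card S \<le> k" shows "proper_set k S"
proof -
  from assms(2) have "S \<noteq> {0..k}" by auto
  with assms(1) show ?thesis unfolding proper_set_def by auto
qed

lemma proper_set_word: "set w \<subseteq> {0..k} \<Longrightarrow> length w \<le> k \<Longrightarrow> proper_set k (set w)"
  by (rule proper_set_card) (auto intro: le_trans[OF card_length])

lemma properword_proper_set: "properword k u \<Longrightarrow> proper_set k (set u)"
  unfolding properword_def proper_set_def by auto

lemma properword_of_length: "set w \<subseteq> {0..k} \<Longrightarrow> length w \<le> k \<Longrightarrow> properword k w"
  using proper_set_word unfolding proper_set_def properword_def by fastforce

lemma first_missing:
  assumes "proper_set k S" shows "first_missing k S \<le> k" "first_missing k S \<notin> S"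
proof -
  from assms obtain a where "a \<le> k \<and> a \<notin> S" unfolding proper_set_def by blast
  then have "first_missing k S \<le> k \<and> first_missing k S \<notin> S"
    unfolding first_missing_def by (rule LeastI)
  then show "first_missing k S \<le> k" "first_missing k S \<notin> S" by auto
qed

lemma rk_first_missing: "rk k S x = (x + k - first_missing k S) mod (k + 1)"
  unfolding rk_def first_missing_def by simp

lemma rk_eq:
  assumes "first_missing k S \<le> k" "x \<le> k"
  shows "rk k S x = (if first_missing k S < x then x - first_missing k S - 1
                     else x + k - first_missing k S)"
proof (cases "first_missing k S < x")
  case True
  then have "x + k - first_missing k S = (x - first_missing k S - 1) + (k + 1)" by simp
  then have "rk k S x = (x - first_missing k S - 1) mod (k + 1)"
    unfolding rk_first_missing by (simp only: mod_add_self2)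
  then show ?thesis using True assms by simp
next
  case False
  then show ?thesis using assms unfolding rk_first_missing by simp
qed

lemma rk_inj:
  assumes "proper_set k S" "x \<le> k" "y \<le> k" "rk k S x = rk k S y" shows "x = y"
  using assms(2-4) first_missing(1)[OF assms(1)] rk_eq[OF first_missing(1)[OF assms(1)]]
  by (auto split: if_splits)

lemma rk_succ:
  assumes "proper_set k S" "x \<in> S" "(x + 1) mod (k + 1) \<in> S"
  shows "rk k S ((x + 1) mod (k + 1)) = rk k S x + 1"
proof -
  have m: "first_missing k S \<le> k" "first_missing k S \<notin> S" using first_missing[OF assms(1)] by auto
  have "x \<le> k" using assms unfolding proper_set_def by auto
  moreover have "x \<noteq> first_missing k S" "(x + 1) mod (k + 1) \<noteq> first_missing k S"
    using m assms by metis+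
  ultimately show ?thesis
    using m rk_eq[OF m(1), of x] rk_eq[OF m(1), of "(x + 1) mod (k + 1)"]
    by (cases "x = k") auto
qed

lemma decr_distinct: "decr k S xs \<Longrightarrow> distinct xs"
  unfolding decr_def by (induction xs) auto

lemma incr_distinct: "incr k S xs \<Longrightarrow> distinct xs"
  unfolding incr_def by (induction xs) auto

lemma decr_rev: "decr k S (rev xs) = incr k S xs"
  unfolding decr_def incr_def by (simp add: sorted_wrt_rev)

lemma incr_rev: "incr k S (rev xs) = decr k S xs"
  unfolding decr_def incr_def by (simp add: sorted_wrt_rev)

lemma decr_unique: "decr k S xs \<Longrightarrow> decr k S ys \<Longrightarrow> set xs = set ys \<Longrightarrow> xs = ys"
proof (induction xs arbitrary: ys)
  case Nil
  then show ?case by simp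
next
  case (Cons x xs)
  then obtain y ys' where ys: "ys = y # ys'" by (cases ys) auto
  have dx: "\<forall>z\<in>set xs. rk k S z < rk k S x" "decr k S xs"
    using Cons.prems unfolding decr_def by auto
  have dy: "\<forall>z\<in>set ys'. rk k S z < rk k S y" "decr k S ys'"
    using Cons.prems ys unfolding decr_def by auto
  have "x = y"
  proof (rule ccontr)
    assume "x \<noteq> y"
    then have "x \<in> set ys'" "y \<in> set xs" using Cons.prems ys by auto
    then show False using dx dy by fastforce
  qed
  moreover have "set xs = set ys'"
    using Cons.prems ys \<open>x = y\<close> decr_distinct[OF Cons.prems(1)] decr_distinct[OF Cons.prems(2)]
    by (metis distinct.simps(2) list.set(2) Diff_insert_absorb)
  ultimately show ?case using Cons.IH[OF dx(2) dy(2)] ys by simp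
qed

lemma decr_exists: assumes "proper_set k S" "A \<subseteq> S" shows "\<exists>xs. set xs = A \<and> decr k S xs"
proof -
  have fin: "finite A"
    using assms unfolding proper_set_def by (meson finite_atLeastAtMost finite_subset)
  define zs where "zs = sort_key (rk k S) (sorted_list_of_set A)"
  have zs: "set zs = A" "distinct zs" "sorted (map (rk k S) zs)"
    unfolding zs_def using fin by simp_all
  have "inj_on (rk k S) A"
    using rk_inj[OF assms(1)] assms unfolding proper_set_def inj_on_def
    by (meson atLeastAtMost_iff subsetD)
  then have "sorted_wrt (<) (map (rk k S) zs)"
    using zs by (simp add: distinct_map strict_sorted_iff)
  then have "incr k S zs" unfolding incr_def by (simp add: sorted_wrt_map)
  then show ?thesis using zs by (metis decr_rev set_rev)
qed

definition decr_list :: "nat \<Rightarrow> nat set \<Rightarrow> nat set \<Rightarrow> nat list" where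
  "decr_list k S A = (SOME xs. set xs = A \<and> decr k S xs)"

definition incr_list :: "nat \<Rightarrow> nat set \<Rightarrow> nat set \<Rightarrow> nat list" where
  "incr_list k S A = rev (decr_list k S A)"

lemma decr_list:
  assumes "proper_set k S" "A \<subseteq> S"
  shows "set (decr_list k S A) = A" "decr k S (decr_list k S A)"
  using someI_ex[OF decr_exists[OF assms]] unfolding decr_list_def by auto

lemma incr_list:
  assumes "proper_set k S" "A \<subseteq> S"
  shows "set (incr_list k S A) = A" "incr k S (incr_list k S A)"
  using decr_list[OF assms] unfolding incr_list_def by (auto simp: incr_rev)

lemma decr_list_set:
  assumes "proper_set k S" "decr k S xs" "set xs \<subseteq> S" shows "decr_list k S (set xs) = xs"
  using decr_unique[OF decr_list(2)[OF assms(1,3)] assms(2)] decr_list(1)[OF assms(1,3)] .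

lemma incr_list_set: "proper_set k S \<Longrightarrow> incr k S xs \<Longrightarrow> set xs \<subseteq> S \<Longrightarrow> incr_list k S (set xs) = xs"
  using decr_list_set[of k S "rev xs"] unfolding incr_list_def by (simp add: decr_rev)

lemma length_decr_list:
  assumes "proper_set k S" "A \<subseteq> S" shows "length (decr_list k S A) = card A"
  using distinct_card[OF decr_distinct[OF decr_list(2)[OF assms]]] decr_list(1)[OF assms] by simp

lemma length_incr_list:
  "proper_set k S \<Longrightarrow> A \<subseteq> S \<Longrightarrow> length (incr_list k S A) = card A"
  unfolding incr_list_def by (simp add: length_decr_list)

section \<open>Reordering words by commutations\<close>

fun succ_before :: "nat \<Rightarrow> nat list \<Rightarrow> bool" where
  "succ_before k [] = True"
| "succ_before k (x # xs) = ((x + 1) mod (k + 1) \<notin> set xs \<and> succ_before k xs)"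

lemma succ_before_remove: "succ_before k (p @ y # q) \<Longrightarrow> succ_before k (p @ q)"
  by (induction p) auto

lemma succ_before_append: "succ_before k (p @ q) \<Longrightarrow> x \<in> set p \<Longrightarrow> (x + 1) mod (k + 1) \<notin> set q"
  by (induction p) auto

text \<open>Move the first letter \<open>y\<close> of \<open>ys\<close> to the front of \<open>xs\<close>: a letter \<open>x\<close> passed on the way is
  not \<open>y + 1\<close> because \<open>y + 1\<close> does not follow \<open>y\<close> in \<open>ys\<close>, and not \<open>y - 1\<close> because \<open>y\<close> does not
  follow \<open>y - 1\<close> in \<open>xs\<close>; so \<open>x\<close> and \<open>y\<close> commute.\<close>

lemma succ_before_rel_conv:
  "distinct xs \<Longrightarrow> distinct ys \<Longrightarrow> set xs = set ys \<Longrightarrow> set ys \<subseteq> {0..k} \<Longrightarrow>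
   succ_before k xs \<Longrightarrow> succ_before k ys \<Longrightarrow> rel_conv k xs ys"
proof (induction ys arbitrary: xs)
  case Nil
  then show ?case by simp
next
  case (Cons y ys xs)
  have "y \<in> set xs" using Cons.prems(3) by simp
  then obtain p q where xs: "xs = p @ y # q" by (meson split_list)
  have commute: "\<forall>x\<in>set p. x \<le> k \<and> \<not> cadj k x y"
  proof
    fix x assume x: "x \<in> set p"
    then have xys: "x \<in> set ys" using Cons.prems(1,3) xs by auto
    then have "(y + 1) mod (k + 1) \<noteq> x" using Cons.prems(6) by auto
    moreover have "(x + 1) mod (k + 1) \<noteq> y"
      using succ_before_append[of k p "y # q" x] Cons.prems(5) xs x by auto
    ultimately show "x \<le> k \<and> \<not> cadj k x y"
      using xys Cons.prems(4) unfolding cadj_def by auto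
  qed
  have yk: "y \<le> k" and qk: "set q \<subseteq> {0..k}" using Cons.prems(3,4) xs by auto
  have "rel_conv k ([] @ (p @ [y]) @ q) ([] @ (y # p) @ q)"
    using rel_conv_append[OF rel_conv_commute[OF commute yk], of "[]" q] qk by simp
  moreover have "rel_conv k (p @ q) ys"
  proof (rule Cons.IH)
    have "y \<notin> set ys" "y \<notin> set p" "y \<notin> set q" using Cons.prems(1,2) xs by auto
    moreover have "insert y (set (p @ q)) = insert y (set ys)" using Cons.prems(3) xs by simp
    ultimately show "set (p @ q) = set ys" by (metis Diff_insert_absorb Un_iff set_append)
    show "distinct (p @ q)" using Cons.prems(1) xs by simp
    show "succ_before k (p @ q)" using succ_before_remove Cons.prems(5) xs by blast
    show "distinct ys" "set ys \<subseteq> {0..k}" "succ_before k ys" using Cons.prems(2,4,6) by auto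
  qed
  then have "rel_conv k ([y] @ (p @ q) @ []) ([y] @ ys @ [])"
    using yk by (intro rel_conv_append) auto
  ultimately show ?case using xs by (simp add: rtranclp_trans)
qed

lemma decr_succ_before:
  assumes "proper_set k S" "decr k S xs" "set xs \<subseteq> S" shows "succ_before k xs"
  using assms(2,3)
proof (induction xs)
  case (Cons x xs)
  have d: "\<forall>z\<in>set xs. rk k S z < rk k S x" "decr k S xs" using Cons.prems unfolding decr_def by auto
  have "(x + 1) mod (k + 1) \<notin> set xs"
  proof
    assume h: "(x + 1) mod (k + 1) \<in> set xs"
    then have "rk k S ((x + 1) mod (k + 1)) = rk k S x + 1"
      using rk_succ[OF assms(1)] Cons.prems by auto
    then show False using d h by fastforce
  qed
  then show ?case using Cons d by auto
qed simp

lemma succ_before_if_nth: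
  "(\<forall>p q. p < length xs \<and> q < length xs \<and> q \<noteq> p \<and> xs ! q = (xs ! p + 1) mod (k + 1) \<longrightarrow> q < p)
   \<Longrightarrow> succ_before k xs"
proof (induction xs)
  case (Cons x xs)
  have "(x + 1) mod (k + 1) \<notin> set xs"
  proof
    assume "(x + 1) mod (k + 1) \<in> set xs"
    then obtain j where "j < length xs" "xs ! j = (x + 1) mod (k + 1)" by (meson in_set_conv_nth)
    then show False using Cons.prems[rule_format, of 0 "Suc j"] by auto
  qed
  moreover have "succ_before k xs"
  proof (rule Cons.IH, intro allI impI)
    fix p q assume "p < length xs \<and> q < length xs \<and> q \<noteq> p \<and> xs ! q = (xs ! p + 1) mod (k + 1)"
    then show "q < p" using Cons.prems[rule_format, of "Suc p" "Suc q"] by auto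
  qed
  ultimately show ?case by simp
qed simp

lemma decr_nth_succ:
  assumes "proper_set k S" "decr k S xs" "set xs \<subseteq> S"
    and "p < length xs" "q < length xs" "xs ! q = (xs ! p + 1) mod (k + 1)"
  shows "q < p"
proof -
  have succ: "rk k S (xs ! q) = rk k S (xs ! p) + 1"
    using rk_succ[OF assms(1), of "xs ! p"] assms(3-6) by (metis nth_mem subsetD)
  then have "p \<noteq> q" by auto
  moreover have "\<not> p < q"
    using sorted_wrt_nth_less[OF assms(2)[unfolded decr_def]] assms(5) succ by fastforce
  ultimately show "q < p" by linarith
qed

lemma dword:
  assumes "proper_set k A"
  shows "distinct (dword k A)" "set (dword k A) = A" "succ_before k (dword k A)"
proof -
  let ?P = "\<lambda>xs. distinct xs \<and> set xs = A \<and> (\<forall>p q. p < length xs \<and> q < length xs \<and> q \<noteq> p \<and>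
    xs ! q = (xs ! p + 1) mod (k + 1) \<longrightarrow> q < p)"
  have "?P (decr_list k A A)"
    using decr_list[OF assms order_refl] decr_distinct
      decr_nth_succ[OF assms decr_list(2)[OF assms order_refl]] by simp
  then have "?P (dword k A)" unfolding dword_def by (rule someI)
  then show "distinct (dword k A)" "set (dword k A) = A" "succ_before k (dword k A)"
    using succ_before_if_nth by blast+
qed

lemma dword_rel_conv:
  assumes "proper_set k S" "A \<subseteq> S" shows "rel_conv k (dword k A) (decr_list k S A)"
proof (rule succ_before_rel_conv)
  show "distinct (dword k A)" "succ_before k (dword k A)"
    using dword[OF proper_set_subset[OF assms]] by blast+
  show "distinct (decr_list k S A)" "set (dword k A) = set (decr_list k S A)"
    using decr_list[OF assms] decr_distinct dword(2)[OF proper_set_subset[OF assms]] by auto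
  show "set (decr_list k S A) \<subseteq> {0..k}"
    using decr_list[OF assms] assms unfolding proper_set_def by auto
  show "succ_before k (decr_list k S A)"
    using decr_succ_before[OF assms(1) decr_list(2)[OF assms]] decr_list(1)[OF assms] assms(2)
    by simp
qed

lemma dword_iword_rel_conv:
  assumes "proper_set k S" "A \<subseteq> S" "B \<subseteq> S"
  shows "rel_conv k (dword k A @ iword k B) (decr_list k S A @ incr_list k S B)"
proof -
  have "set (iword k B) \<subseteq> {0..k}" "set (decr_list k S A) \<subseteq> {0..k}"
    using assms dword(2)[OF proper_set_subset[OF assms(1,3)]] decr_list(1)[OF assms(1,2)]
    unfolding iword_def proper_set_def by auto
  then have "rel_conv k ([] @ dword k A @ iword k B) ([] @ decr_list k S A @ iword k B)"
    and "rel_conv k (decr_list k S A @ rev (dword k B) @ [])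
      (decr_list k S A @ rev (decr_list k S B) @ [])"
    by (intro rel_conv_append dword_rel_conv rel_conv_rev assms; simp add: iword_def)+
  then show ?thesis unfolding iword_def incr_list_def by (simp add: rtranclp_trans)
qed

section \<open>The product \<open>h\<^sub>a e\<^sub>b\<close> as a sum of valley words\<close>

lemma Ind_eq_sum_wd: "finite X \<Longrightarrow> Ind X = (\<lambda>w. \<Sum>u\<in>X. wd u w)"
  unfolding Ind_def wd_def by (auto simp: sum.delta')

lemma sum_wd_take_drop: "(\<Sum>n\<le>length w. wd u (take n w) * wd v (drop n w)) = wd (u @ v) w"
proof -
  have "wd u (take n w) * wd v (drop n w) = (if n = length u \<and> w = u @ v then 1 else 0)"
    if "n \<le> length w" for n
    using that unfolding wd_def by (auto simp: append_eq_conv_conj)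
  then have "(\<Sum>n\<le>length w. wd u (take n w) * wd v (drop n w))
      = (\<Sum>n\<le>length w. if n = length u then (if w = u @ v then 1 else 0) else 0)"
    by (intro sum.cong) auto
  also have "\<dots> = wd (u @ v) w" unfolding wd_def by (auto simp: sum.delta)
  finally show ?thesis .
qed

lemma fmul_sum_wd:
  assumes "finite X" "finite Y"
  shows "fmul (\<lambda>w. \<Sum>x\<in>X. wd (f x) w) (\<lambda>w. \<Sum>y\<in>Y. wd (g y) w)
       = (\<lambda>w. \<Sum>z\<in>X \<times> Y. wd (f (fst z) @ g (snd z)) w)"
proof
  fix w
  have "fmul (\<lambda>w. \<Sum>x\<in>X. wd (f x) w) (\<lambda>w. \<Sum>y\<in>Y. wd (g y) w) w
     = (\<Sum>n\<le>length w. \<Sum>x\<in>X. \<Sum>y\<in>Y. wd (f x) (take n w) * wd (g y) (drop n w))"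
    unfolding fmul_def by (simp add: sum_product)
  also have "\<dots> = (\<Sum>x\<in>X. \<Sum>y\<in>Y. \<Sum>n\<le>length w. wd (f x) (take n w) * wd (g y) (drop n w))"
    by (subst sum.swap) (simp add: sum.swap[of _ "{..length w}"])
  also have "\<dots> = (\<Sum>z\<in>X \<times> Y. wd (f (fst z) @ g (snd z)) w)"
    by (simp add: sum_wd_take_drop sum.cartesian_product case_prod_beta)
  finally show "fmul (\<lambda>w. \<Sum>x\<in>X. wd (f x) w) (\<lambda>w. \<Sum>y\<in>Y. wd (g y) w) w
     = (\<Sum>z\<in>X \<times> Y. wd (f (fst z) @ g (snd z)) w)" .
qed

definition card_subsets :: "nat \<Rightarrow> nat \<Rightarrow> nat set set" where
  "card_subsets k s = {A. A \<subseteq> {0..k} \<and> card A = s}"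

lemma finite_card_subsets: "finite (card_subsets k s)"
  by (rule finite_subset[of _ "Pow {0..k}"]) (auto simp: card_subsets_def)

lemma proper_set_Un:
  assumes "A \<in> card_subsets k a" "B \<in> card_subsets k b" "a + b \<le> k"
  shows "proper_set k (A \<union> B)"
proof (rule proper_set_card)
  show "A \<union> B \<subseteq> {0..k}" using assms unfolding card_subsets_def by auto
  then have "card (A \<union> B) \<le> card A + card B"
    by (meson card_Un_le)
  then show "card (A \<union> B) \<le> k" using assms unfolding card_subsets_def by auto
qed

definition valley_word :: "nat \<Rightarrow> nat \<Rightarrow> nat \<Rightarrow> nat list \<Rightarrow> bool" where
  "valley_word k a r w \<longleftrightarrow> set w \<subseteq> {0..k} \<and> length w = r \<and>
     decr k (set w) (take a w) \<and> incr k (set w) (drop a w)"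

definition valley_of_pair :: "nat \<Rightarrow> nat set \<times> nat set \<Rightarrow> nat list" where
  "valley_of_pair k = (\<lambda>(A, B). decr_list k (A \<union> B) A @ incr_list k (A \<union> B) B)"

lemma fmul_hh_ee_Aeq:
  assumes "a + b \<le> k"
  shows "Aeq k (fmul (hh k a) (ee k b))
           (\<lambda>w. \<Sum>z\<in>card_subsets k a \<times> card_subsets k b. wd (valley_of_pair k z) w)"
proof -
  have "fmul (hh k a) (ee k b) = (\<lambda>w. \<Sum>z\<in>card_subsets k a \<times> card_subsets k b.
          wd (dword k (fst z) @ iword k (snd z)) w)"
    unfolding hh_def ee_def card_subsets_def[symmetric]
    by (rule fmul_sum_wd[OF finite_card_subsets finite_card_subsets])
  moreover have "Aeq k (wd (dword k A @ iword k B)) (wd (valley_of_pair k (A, B)))"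
    if "A \<in> card_subsets k a" "B \<in> card_subsets k b" for A B
    unfolding valley_of_pair_def
    by (auto intro!: rel_conv_Aeq dword_iword_rel_conv proper_set_Un[OF that assms])
  ultimately show ?thesis
    by (auto intro!: Aeq_sum simp: finite_card_subsets)
qed

lemma valley_of_pair:
  assumes "A \<in> card_subsets k a" "B \<in> card_subsets k b" "a + b \<le> k"
  shows "set (take a (valley_of_pair k (A, B))) = A" "set (drop a (valley_of_pair k (A, B))) = B"
    "valley_word k a (a + b) (valley_of_pair k (A, B))"
proof -
  have g: "proper_set k (A \<union> B)" using proper_set_Un[OF assms] .
  have "length (decr_list k (A \<union> B) A) = a" "length (incr_list k (A \<union> B) B) = b"
    using length_decr_list[OF g] length_incr_list[OF g] assms unfolding card_subsets_def by auto
  moreover have "A \<union> B \<subseteq> {0..k}" using assms unfolding card_subsets_def by auto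
  ultimately show "set (take a (valley_of_pair k (A, B))) = A"
    "set (drop a (valley_of_pair k (A, B))) = B"
    "valley_word k a (a + b) (valley_of_pair k (A, B))"
    using decr_list[OF g] incr_list[OF g] unfolding valley_of_pair_def valley_word_def by auto
qed

lemma bij_betw_valley_of_pair:
  assumes "a + b \<le> k"
  shows "bij_betw (valley_of_pair k) (card_subsets k a \<times> card_subsets k b)
           {w. valley_word k a (a + b) w}"
proof (rule bij_betw_byWitness[where f' = "\<lambda>w. (set (take a w), set (drop a w))"])
  show "\<forall>z\<in>card_subsets k a \<times> card_subsets k b.
          (set (take a (valley_of_pair k z)), set (drop a (valley_of_pair k z))) = z"
    using valley_of_pair[OF _ _ assms] by auto
  show "valley_of_pair k ` (card_subsets k a \<times> card_subsets k b) \<subseteq> {w. valley_word k a (a + b) w}"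
    using valley_of_pair(3)[OF _ _ assms] by auto
  show "\<forall>w\<in>{w. valley_word k a (a + b) w}.
          valley_of_pair k (set (take a w), set (drop a w)) = w"
  proof
    fix w assume "w \<in> {w. valley_word k a (a + b) w}"
    then have w: "set w \<subseteq> {0..k}" "length w = a + b"
      "decr k (set w) (take a w)" "incr k (set w) (drop a w)"
      unfolding valley_word_def by auto
    have g: "proper_set k (set w)" using proper_set_word w assms by simp
    have "set (take a w) \<union> set (drop a w) = set w" by (metis append_take_drop_id set_append)
    then show "valley_of_pair k (set (take a w), set (drop a w)) = w"
      unfolding valley_of_pair_def
      using decr_list_set[OF g w(3)] incr_list_set[OF g w(4)]
      by (simp add: set_take_subset set_drop_subset)
  qed
  show "(\<lambda>w. (set (take a w), set (drop a w))) ` {w. valley_word k a (a + b) w}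
          \<subseteq> card_subsets k a \<times> card_subsets k b"
  proof (rule image_subsetI)
    fix w assume "w \<in> {w. valley_word k a (a + b) w}"
    then have "distinct (take a w)" "distinct (drop a w)" "length w = a + b" "set w \<subseteq> {0..k}"
      using decr_distinct incr_distinct unfolding valley_word_def by auto
    then show "(set (take a w), set (drop a w)) \<in> card_subsets k a \<times> card_subsets k b"
      unfolding card_subsets_def
      by (auto simp: distinct_card dest: in_set_takeD in_set_dropD)
  qed
qed

lemma fmul_hh_ee_Aeq_valley:
  assumes "a + b \<le> k"
  shows "Aeq k (fmul (hh k a) (ee k b)) (Ind {w. valley_word k a (a + b) w})"
proof -
  have fin: "finite {w. valley_word k a (a + b) w}"
    using bij_betw_finite[OF bij_betw_valley_of_pair[OF assms]] finite_card_subsets by blast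
  have "Ind {w. valley_word k a (a + b) w}
      = (\<lambda>w. \<Sum>z\<in>card_subsets k a \<times> card_subsets k b. wd (valley_of_pair k z) w)"
    unfolding Ind_eq_sum_wd[OF fin]
    by (intro ext sum.reindex_bij_betw[symmetric] bij_betw_valley_of_pair assms)
  then show ?thesis using fmul_hh_ee_Aeq[OF assms] by simp
qed

section \<open>Valley words are hook words\<close>

lemma decr_take_nth:
  assumes "decr k S (take m u)" "Suc t < m" "Suc t < length u"
  shows "rk k S (u ! Suc t) < rk k S (u ! t)"
  using sorted_wrt_nth_less[OF assms(1)[unfolded decr_def], of t "Suc t"] assms(2,3) by simp

lemma incr_drop_nth:
  assumes "incr k S (drop m u)" "m \<le> t" "Suc t < length u"
  shows "rk k S (u ! t) < rk k S (u ! Suc t)"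
  using sorted_wrt_nth_less[OF assms(1)[unfolded incr_def], of "t - m" "Suc t - m"] assms(2,3)
  by (simp add: Suc_diff_le)

lemma asc_Vshape:
  assumes "Vshape k u p" "p < length u" shows "asc k u = length u - p - 1"
proof -
  have "{t. Suc t < length u \<and> rk k (set u) (u ! t) < rk k (set u) (u ! Suc t)}
      = {p..<length u - 1}"
  proof (intro set_eqI iffI)
    fix t assume t: "t \<in> {t. Suc t < length u \<and> rk k (set u) (u ! t) < rk k (set u) (u ! Suc t)}"
    then have "\<not> t < p"
      using decr_take_nth[of k "set u" "Suc p" u t] assms unfolding Vshape_def by auto
    then show "t \<in> {p..<length u - 1}" using t by auto
  next
    fix t assume "t \<in> {p..<length u - 1}"
    then show "t \<in> {t. Suc t < length u \<and> rk k (set u) (u ! t) < rk k (set u) (u ! Suc t)}"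
      using incr_drop_nth[of k "set u" p u t] assms unfolding Vshape_def by auto
  qed
  then show ?thesis unfolding asc_def by simp
qed

lemma asc_Ushape: assumes "Ushape k u p" shows "asc k u = length u - p - 2"
proof -
  have "{t. Suc t < length u \<and> rk k (set u) (u ! t) < rk k (set u) (u ! Suc t)}
      = {Suc p..<length u - 1}"
  proof (intro set_eqI iffI)
    fix t assume t: "t \<in> {t. Suc t < length u \<and> rk k (set u) (u ! t) < rk k (set u) (u ! Suc t)}"
    then have "\<not> t < p"
      using decr_take_nth[of k "set u" "Suc p" u t] assms unfolding Ushape_def by auto
    moreover have "t \<noteq> p" using t assms unfolding Ushape_def by auto
    ultimately show "t \<in> {Suc p..<length u - 1}" using t by auto
  next
    fix t assume "t \<in> {Suc p..<length u - 1}"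
    then show "t \<in> {t. Suc t < length u \<and> rk k (set u) (u ! t) < rk k (set u) (u ! Suc t)}"
      using incr_drop_nth[of k "set u" "Suc p" u t] assms unfolding Ushape_def by auto
  qed
  then show ?thesis unfolding asc_def by simp
qed

lemma Ushape_unique: assumes "Ushape k w p" "Ushape k w q" shows "p = q"
  using asc_Ushape[OF assms(1)] asc_Ushape[OF assms(2)] assms unfolding Ushape_def by arith

lemma not_Vshape_Ushape: assumes "Vshape k w q" "Ushape k w p" shows False
proof (cases "p < q")
  case True
  then have "rk k (set w) (w ! Suc p) < rk k (set w) (w ! p)"
    using decr_take_nth[of k "set w" "Suc q" w p] assms unfolding Vshape_def Ushape_def by simp
  then show False using assms(2) unfolding Ushape_def by simp
next
  case False
  then have "rk k (set w) (w ! p) < rk k (set w) (w ! Suc p)"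
    using incr_drop_nth[of k "set w" q w p] assms unfolding Vshape_def Ushape_def by simp
  then show False using assms(2) unfolding Ushape_def by simp
qed

lemma Vshape_last:
  assumes "Vshape k w p" "length w \<le> p" "w \<noteq> []" shows "Vshape k w (length w - 1)"
  using assms unfolding Vshape_def incr_def by (simp add: sorted_wrt01)

lemma Vshape_valley:
  assumes "Vshape k w p" "p \<le> a" "a \<le> Suc p"
  shows "decr k (set w) (take a w)" "incr k (set w) (drop a w)"
proof -
  have "take a w = take a (take (Suc p) w)" "drop a w = drop (a - p) (drop p w)"
    using assms(2,3) by (simp_all add: min_def)
  then show "decr k (set w) (take a w)" "incr k (set w) (drop a w)"
    using assms(1) unfolding Vshape_def decr_def incr_def
    by (metis sorted_wrt_take sorted_wrt_drop)+
qed

lemma Vset_valley_word: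
  assumes "w \<in> Vset k r (int b) \<or> w \<in> Vset k r (int b - 1)" "a + b = r"
  shows "valley_word k a r w"
proof (cases "w = []")
  case True
  then show ?thesis using assms unfolding Vset_def valley_word_def decr_def incr_def by auto
next
  case False
  obtain p where V: "Vshape k w p" and w: "properword k w" "length w = r"
    and asc: "int (asc k w) = int b \<or> int (asc k w) = int b - 1"
    using assms(1) unfolding Vset_def isV_def by auto
  obtain q where q: "Vshape k w q" "q < length w"
    using Vshape_last[OF V _ False] V False by (cases "p < length w") auto
  then have "q \<le> a" "a \<le> Suc q" using asc_Vshape[OF q] asc w(2) assms(2) by auto
  then show ?thesis
    using Vshape_valley[OF q(1)] w unfolding valley_word_def properword_def by auto
qed

lemma Uset_valley_word:
  assumes "w \<in> Uset k r (int b - 1)" "a + b = r" shows "valley_word k a r w"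
proof -
  obtain p where U: "Ushape k w p" and w: "properword k w" "length w = r"
    and "int (asc k w) = int b - 1"
    using assms unfolding Uset_def isU_def by auto
  then have "a = Suc p" using asc_Ushape[OF U] assms(2) unfolding Ushape_def by simp
  then show ?thesis using U w unfolding valley_word_def Ushape_def properword_def by auto
qed

lemma valley_word_shapes:
  assumes "decr k (set w) (take a w)" "incr k (set w) (drop a w)"
    and "proper_set k (set w)" "a \<le> length w" "w \<noteq> []"
  shows "0 < a \<and> Vshape k w (a - 1) \<or> a < length w \<and> Vshape k w a
    \<or> 0 < a \<and> a < length w \<and> Ushape k w (a - 1)"
proof -
  consider "a = 0" | "a = length w" | "0 < a" "a < length w" using assms(4) by linarith
  then show ?thesis
  proof cases
    case 1
    then show ?thesis using assms(2,5) unfolding Vshape_def decr_def by (simp add: sorted_wrt01)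
  next
    case 2
    then show ?thesis using assms(1,5) unfolding Vshape_def incr_def by (simp add: sorted_wrt01)
  next
    case 3
    define x where "x = w ! (a - 1)"
    define y where "y = w ! a"
    have dy: "drop a w = y # drop (Suc a) w"
      unfolding y_def using 3 by (simp add: Cons_nth_drop_Suc)
    have dx: "drop (a - 1) w = x # drop a w"
      unfolding x_def using 3 Cons_nth_drop_Suc[of "a - 1" w] by simp
    have ty: "take (Suc a) w = take a w @ [y]"
      unfolding y_def using 3 by (simp add: take_Suc_conv_app_nth)
    have tx: "take a w = take (a - 1) w @ [x]"
      unfolding x_def using 3 take_Suc_conv_app_nth[of "a - 1" w] by simp
    consider "rk k (set w) x < rk k (set w) y" | "rk k (set w) y < rk k (set w) x"
      | "rk k (set w) x = rk k (set w) y" by linarith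
    then show ?thesis
    proof cases
      case 1
      then have "incr k (set w) (drop (a - 1) w)"
        using assms(2) unfolding dx dy incr_def by auto
      then show ?thesis using assms(1) 3 unfolding Vshape_def by simp
    next
      case 2
      then have "decr k (set w) (take (Suc a) w)"
        using assms(1) unfolding ty tx decr_def by (auto simp: sorted_wrt_append)
      then show ?thesis using assms(2) 3 unfolding Vshape_def by simp
    next
      case eq: 3
      have "x \<in> set w" "y \<in> set w" unfolding x_def y_def using 3 by auto
      then have "x = y" using rk_inj[OF assms(3) _ _ eq] assms(3) unfolding proper_set_def by force
      then show ?thesis using assms 3 unfolding Ushape_def x_def y_def by simp
    qed
  qed
qed

lemma valley_word_cases:
  assumes "valley_word k a r w" "a + b = r" "r \<le> k"
  shows "w \<in> Vset k r (int b) \<or> w \<in> Vset k r (int b - 1) \<or> w \<in> Uset k r (int b - 1)"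
proof -
  have w: "set w \<subseteq> {0..k}" "length w = r" "decr k (set w) (take a w)" "incr k (set w) (drop a w)"
    using assms(1) unfolding valley_word_def by auto
  have pw: "properword k w" using properword_of_length w assms by simp
  have in_Vset: "w \<in> Vset k r t"
    if "Vshape k w p" "p < length w" "int (length w - p - 1) = t" for p t
    using asc_Vshape[OF that(1,2)] that pw w unfolding Vset_def isV_def by auto
  have in_Uset: "w \<in> Uset k r t" if "Ushape k w p" "int (length w - p - 2) = t" for p t
    using asc_Ushape[OF that(1)] that pw w unfolding Uset_def isU_def by auto
  show ?thesis
  proof (cases "w = []")
    case True
    then have "Vshape k w 0" "asc k w = 0" "b = 0"
      using w assms(2) unfolding Vshape_def decr_def incr_def asc_def by auto
    then show ?thesis using pw w unfolding Vset_def isV_def by auto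
  next
    case False
    have "proper_set k (set w)" using proper_set_word w assms by simp
    then consider (left) "0 < a" "Vshape k w (a - 1)" | (right) "a < length w" "Vshape k w a"
      | (U) "0 < a" "a < length w" "Ushape k w (a - 1)"
      using valley_word_shapes[OF w(3,4) _ _ False] w assms(2) by force
    then show ?thesis
    proof cases
      case left
      moreover have "a - 1 < length w" "int (length w - (a - 1) - 1) = int b"
        using left w assms(2) by auto
      ultimately show ?thesis using in_Vset by blast
    next
      case right
      moreover have "int (length w - a - 1) = int b - 1" using right w assms(2) by auto
      ultimately show ?thesis using in_Vset by blast
    next
      case U
      moreover have "int (length w - (a - 1) - 2) = int b - 1" using U w assms(2) by auto
      ultimately show ?thesis using in_Uset by blast
    qed
  qed
qed

lemma Ind_valley_word:
  assumes "a + b = r" "r \<le> k"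
  shows "Ind {w. valley_word k a r w}
       = (\<lambda>w. Ind (Vset k r (int b)) w + Ind (Vset k r (int b - 1)) w
              + Ind (Uset k r (int b - 1)) w)"
proof
  fix w
  have "w \<notin> Vset k r t \<or> w \<notin> Uset k r t'" for t t'
    using not_Vshape_Ushape unfolding Vset_def Uset_def isV_def isU_def by blast
  moreover have "w \<notin> Vset k r (int b) \<or> w \<notin> Vset k r (int b - 1)"
    unfolding Vset_def by auto
  ultimately show "Ind {w. valley_word k a r w} w
      = Ind (Vset k r (int b)) w + Ind (Vset k r (int b - 1)) w + Ind (Uset k r (int b - 1)) w"
    using valley_word_cases[OF _ assms] Vset_valley_word[OF _ assms(1)]
      Uset_valley_word[OF _ assms(1)]
    unfolding Ind_def by auto
qed

lemma sum_alternating_telescope: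
  fixes f :: "nat \<Rightarrow> 'a::comm_ring_1"
  shows "(\<Sum>j<n. (-1) ^ j * (f j + f (Suc j))) = f 0 - (-1) ^ n * f n"
  by (induction n) (simp_all add: algebra_simps)

lemma shook_Aeq_valley_sum:
  assumes "i \<le> r" "r \<le> k"
  shows "Aeq k (shook k r i) (\<lambda>w. \<Sum>j\<le>i. (-1) ^ j * (Ind (Vset k r (int i - int j)) w
           + Ind (Vset k r (int i - int j - 1)) w + Ind (Uset k r (int i - int j - 1)) w))"
  unfolding shook_def
proof (rule Aeq_sum)
  fix j assume "j \<in> {..i}"
  then have ab: "(r - i + j) + (i - j) = r" "int (i - j) = int i - int j" using assms by auto
  show "Aeq k (\<lambda>w. (-1) ^ j * fmul (hh k (r - i + j)) (ee k (i - j)) w)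
     (\<lambda>w. (-1) ^ j * (Ind (Vset k r (int i - int j)) w
           + Ind (Vset k r (int i - int j - 1)) w + Ind (Uset k r (int i - int j - 1)) w))"
    using Aeq_smult[OF fmul_hh_ee_Aeq_valley[of "r - i + j" "i - j" k]]
      Ind_valley_word[OF ab(1) assms(2)] ab assms(2) by simp
qed simp

lemma shook_Aeq_Uset_sum:
  assumes "i \<le> r" "r \<le> k"
  shows "Aeq k (shook k r i)
           (\<lambda>w. Ind (Vset k r (int i)) w + (\<Sum>j<i. (-1) ^ j * Ind (Uset k r (int i - int j - 1)) w))"
proof -
  have "(\<Sum>j\<le>i. (-1) ^ j * (Ind (Vset k r (int i - int j)) w
           + Ind (Vset k r (int i - int j - 1)) w + Ind (Uset k r (int i - int j - 1)) w))
      = Ind (Vset k r (int i)) w + (\<Sum>j<i. (-1) ^ j * Ind (Uset k r (int i - int j - 1)) w)" for w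
  proof -
    let ?V = "\<lambda>j. Ind (Vset k r (int i - int j)) w"
    let ?U = "\<lambda>j. Ind (Uset k r (int i - int j - 1)) w"
    have "Ind (Vset k r (-1)) w = 0" "Ind (Uset k r (-1)) w = 0"
      unfolding Ind_def Vset_def Uset_def by auto
    have "?V (Suc j) = Ind (Vset k r (int i - int j - 1)) w" for j by (simp add: algebra_simps)
    then have "(\<Sum>j\<le>i. (-1) ^ j * (?V j + Ind (Vset k r (int i - int j - 1)) w + ?U j))
        = (\<Sum>j<Suc i. (-1) ^ j * (?V j + ?V (Suc j))) + (\<Sum>j<Suc i. (-1) ^ j * ?U j)"
      unfolding lessThan_Suc_atMost by (simp add: algebra_simps sum.distrib)
    also have "(\<Sum>j<Suc i. (-1) ^ j * (?V j + ?V (Suc j))) = ?V 0 - (-1) ^ Suc i * ?V (Suc i)"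
      by (rule sum_alternating_telescope)
    also have "(\<Sum>j<Suc i. (-1) ^ j * ?U j) = (\<Sum>j<i. (-1) ^ j * ?U j)"
      using \<open>Ind (Uset k r (-1)) w = 0\<close> by simp
    finally show ?thesis using \<open>Ind (Vset k r (-1)) w = 0\<close> by simp
  qed
  then show ?thesis using shook_Aeq_valley_sum[OF assms] by simp
qed

section \<open>The letter \<open>u\<^sub>m\<^sub>i\<^sub>n\<close>\<close>

lemma umin_cong: "set u = set v \<Longrightarrow> umin k u = umin k v"
  unfolding umin_def gapletter_def by simp

lemma wconn_cong:
  assumes "set u = set v" "\<And>x. count_list u x = count_list v x" shows "wconn k u = wconn k v"
  using umin_cong[OF assms(1)] assms unfolding wconn_def kconn_def by simp

lemma gapletter_exists:
  assumes g: "proper_set k (set u)" and "\<not> kconn k u" shows "\<exists>c. gapletter k u c"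
proof -
  let ?r = "rk k (set u)"
  have letters: "set u \<subseteq> {0..k}" using g unfolding proper_set_def by blast
  obtain x z y where xz: "x \<in> set u" "z \<in> set u" "y \<le> k" "y \<notin> set u"
    and "?r x \<le> ?r y" "?r y \<le> ?r z"
    using assms(2) unfolding kconn_def by blast
  moreover have "?r x \<noteq> ?r y" "?r z \<noteq> ?r y"
    using rk_inj[OF g _ xz(3)] xz letters by fastforce+
  ultimately have xy: "?r x < ?r y" and yz: "?r y < ?r z" by simp_all
  define A where "A = {v \<in> set u. ?r v < ?r y}"
  define C where "C = {v \<in> set u. ?r y < ?r v}"
  have fin: "finite A" "A \<noteq> {}" "finite C" "C \<noteq> {}"
    unfolding A_def C_def using xz xy yz by auto
  obtain a where "a \<in> A" "Max (?r ` A) = ?r a" using obtains_MAX[OF fin(1,2)] .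
  then have a: "a \<in> A" "\<And>v. v \<in> A \<Longrightarrow> ?r v \<le> ?r a"
    using fin(1) by (metis Max_ge finite_imageI imageI)+
  obtain c where "c \<in> C" "Min (?r ` C) = ?r c" using obtains_MIN[OF fin(3,4)] .
  then have c: "c \<in> C" "\<And>v. v \<in> C \<Longrightarrow> ?r c \<le> ?r v"
    using fin(3) by (metis Min_le finite_imageI imageI)+
  have between: "v \<in> A \<or> v \<in> C" if "v \<in> set u" for v
    using rk_inj[OF g _ xz(3), of v] xz(4) that letters unfolding A_def C_def by fastforce
  have "gapletter k u c" unfolding gapletter_def
  proof (intro conjI bexI[of _ a])
    show "c \<in> set u" "a \<in> set u" "?r a < ?r c" using a c unfolding A_def C_def by auto
    show "c \<noteq> (a + 1) mod (k + 1)"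
      using rk_succ[OF g, of a] a c unfolding A_def C_def by fastforce
    show "\<not> (\<exists>b\<in>set u. ?r a < ?r b \<and> ?r b < ?r c)"
      using between a c by fastforce
  qed
  then show ?thesis by blast
qed

lemma umin_exists:
  assumes "proper_set k (set u)" "\<not> kconn k u" shows "\<exists>c. umin k u c"
proof -
  let ?G = "{c. gapletter k u c}"
  have "finite ?G" by (rule finite_subset[of _ "set u"]) (auto simp: gapletter_def)
  moreover have "?G \<noteq> {}" using gapletter_exists[OF assms] by auto
  ultimately obtain c where "c \<in> ?G" "Min (rk k (set u) ` ?G) = rk k (set u) c"
    using obtains_MIN by blast
  then have "umin k u c"
    unfolding umin_def using \<open>finite ?G\<close> by (metis Min_le finite_imageI imageI mem_Collect_eq)
  then show ?thesis ..
qed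

lemma umin_unique:
  assumes "proper_set k (set u)" "umin k u c" "umin k u c'" shows "c = c'"
proof (rule rk_inj[OF assms(1)])
  show "c \<le> k" "c' \<le> k" using assms unfolding umin_def gapletter_def proper_set_def by auto
  show "rk k (set u) c = rk k (set u) c'" using assms(2,3) unfolding umin_def by (meson le_antisym)
qed

definition the_umin :: "nat \<Rightarrow> nat list \<Rightarrow> nat" where
  "the_umin k u = (THE c. umin k u c)"

lemma the_umin_eq: "proper_set k (set u) \<Longrightarrow> umin k u c \<Longrightarrow> the_umin k u = c"
  unfolding the_umin_def using umin_unique by blast

text \<open>This is what lets \<open>u\<^sub>m\<^sub>i\<^sub>n\<close> commute past all smaller letters: the letter just below a gap
  letter is not its predecessor, and anything lower has rank at least two less.\<close>

lemma gapletter_not_cadj: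
  assumes g: "proper_set k (set u)" and "gapletter k u c" "x \<in> set u"
    and "rk k (set u) x < rk k (set u) c"
  shows "\<not> cadj k x c"
proof
  let ?r = "rk k (set u)"
  obtain a where a: "a \<in> set u" "?r a < ?r c" "c \<noteq> (a + 1) mod (k + 1)"
    "\<not> (\<exists>b\<in>set u. ?r a < ?r b \<and> ?r b < ?r c)"
    and c: "c \<in> set u"
    using assms(2) unfolding gapletter_def by blast
  assume "cadj k x c"
  then consider "c = (x + 1) mod (k + 1)" | "x = (c + 1) mod (k + 1)" unfolding cadj_def by blast
  then show False
  proof cases
    case 1
    then have "?r c = ?r x + 1" using rk_succ[OF g assms(3)] c by simp
    moreover have "\<not> ?r a < ?r x" using a(4) assms(3,4) by blast
    ultimately have "?r x = ?r a" using a(2) by linarith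
    moreover have "x \<le> k" "a \<le> k" using g assms(3) a(1) unfolding proper_set_def by auto
    ultimately have "x = a" using rk_inj[OF g] by blast
    then show False using 1 a(3) by simp
  next
    case 2
    then have "?r x = ?r c + 1" using rk_succ[OF g c] assms(3) by simp
    then show False using assms(4) by simp
  qed
qed

lemma distinct_filter_eq:
  "distinct xs \<Longrightarrow> filter (\<lambda>x. x = c) xs = (if c \<in> set xs then [c] else [])"
  by (induction xs) auto

lemma decr_split:
  assumes "decr k S xs" "\<forall>x\<in>set xs. x \<noteq> c \<longrightarrow> rk k S x \<noteq> rk k S c"
  shows "xs = filter (\<lambda>x. rk k S c < rk k S x) xs @ filter (\<lambda>x. x = c) xs
              @ filter (\<lambda>x. rk k S x < rk k S c) xs"
  using assms
proof (induction xs)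
  case (Cons x xs)
  have below: "\<forall>z\<in>set xs. rk k S z < rk k S x" and "decr k S xs"
    using Cons.prems(1) unfolding decr_def by auto
  with Cons have IH: "xs = filter (\<lambda>x. rk k S c < rk k S x) xs @ filter (\<lambda>x. x = c) xs
      @ filter (\<lambda>x. rk k S x < rk k S c) xs" by simp
  show ?case
  proof (cases "rk k S c < rk k S x")
    case True
    then show ?thesis using IH by auto
  next
    case False
    then have "\<forall>z\<in>set xs. rk k S z < rk k S c" using below by fastforce
    then have "filter (\<lambda>x. rk k S c < rk k S x) xs = []" "filter (\<lambda>x. x = c) xs = []"
      "filter (\<lambda>x. rk k S x < rk k S c) xs = xs"
      by (auto simp: filter_empty_conv)
    then show ?thesis using False Cons.prems(2) by auto
  qed
qed simp

lemma incr_split: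
  assumes "incr k S xs" "\<forall>x\<in>set xs. x \<noteq> c \<longrightarrow> rk k S x \<noteq> rk k S c"
  shows "xs = filter (\<lambda>x. rk k S x < rk k S c) xs @ filter (\<lambda>x. x = c) xs
              @ filter (\<lambda>x. rk k S c < rk k S x) xs"
proof -
  have "rev xs = filter (\<lambda>x. rk k S c < rk k S x) (rev xs) @ filter (\<lambda>x. x = c) (rev xs)
      @ filter (\<lambda>x. rk k S x < rk k S c) (rev xs)"
    using decr_split[of k S "rev xs" c] assms by (simp add: decr_rev)
  then have "rev (rev xs) = rev (filter (\<lambda>x. rk k S x < rk k S c) (rev xs))
      @ rev (filter (\<lambda>x. x = c) (rev xs)) @ rev (filter (\<lambda>x. rk k S c < rk k S x) (rev xs))"
    by (metis rev_append append_assoc)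
  then show ?thesis by (simp add: rev_filter[symmetric])
qed

lemma Ushape_append:
  assumes "set (xs @ ys) \<subseteq> {0..k}" "length (xs @ ys) \<le> k"
    and "decr k (set (xs @ ys)) xs" "incr k (set (xs @ ys)) ys"
    and "xs \<noteq> []" "ys \<noteq> []" "last xs = hd ys"
  shows "Ushape k (xs @ ys) (length xs - 1)" "isU k (xs @ ys)" "asc k (xs @ ys) = length ys - 1"
proof -
  have "(xs @ ys) ! (length xs - 1) = last xs" "(xs @ ys) ! length xs = hd ys"
    using assms(5,6) by (simp_all add: nth_append last_conv_nth hd_conv_nth)
  then show U: "Ushape k (xs @ ys) (length xs - 1)"
    unfolding Ushape_def using assms by simp
  show "isU k (xs @ ys)" unfolding isU_def using U properword_of_length assms(1,2) by blast
  show "asc k (xs @ ys) = length ys - 1" using asc_Ushape[OF U] assms(5) by simp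
qed

lemma Ushape_sides:
  assumes "Ushape k w p"
  shows "decr k (set w) (take (Suc p) w)" "incr k (set w) (drop (Suc p) w)"
    "take (Suc p) w \<noteq> []" "drop (Suc p) w \<noteq> []" "length (take (Suc p) w) = Suc p"
    "last (take (Suc p) w) = w ! p" "hd (drop (Suc p) w) = w ! p"
  using assms unfolding Ushape_def by (auto simp: take_Suc_conv_app_nth hd_drop_conv_nth)

lemma Ushape_valley_min:
  assumes "Ushape k u p" "x \<in> set u" "x \<noteq> u ! p"
  shows "rk k (set u) (u ! p) < rk k (set u) x"
proof -
  note sides = Ushape_sides[OF assms(1)]
  obtain B where B: "take (Suc p) u = B @ [u ! p]"
    using sides(3,6) by (metis append_butlast_last_id)
  obtain T where T: "drop (Suc p) u = u ! p # T"
    using sides(4,7) by (metis list.collapse)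
  have "x \<in> set B \<or> x \<in> set T"
    using assms(2,3) append_take_drop_id[of "Suc p" u] unfolding B T
    by (metis Un_iff insert_iff list.set(2) set_append empty_iff empty_set)
  moreover have "\<forall>y\<in>set B. rk k (set u) (u ! p) < rk k (set u) y"
    using sides(1) unfolding B decr_def by (simp add: sorted_wrt_append)
  moreover have "\<forall>y\<in>set T. rk k (set u) (u ! p) < rk k (set u) y"
    using sides(2) unfolding T incr_def by simp
  ultimately show ?thesis by blast
qed

lemma Ushape_split_around:
  assumes U: "Ushape k u p" and g: "proper_set k (set u)" and c: "c \<in> set u" "c \<noteq> u ! p"
  obtains L1 L2 Y1 Y2 where
    "take (Suc p) u = L1 @ filter (\<lambda>x. x = c) (take (Suc p) u) @ L2"
    "drop (Suc p) u = Y1 @ filter (\<lambda>x. x = c) (drop (Suc p) u) @ Y2"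
    "L2 \<noteq> []" "Y1 \<noteq> []" "last L2 = hd Y1"
    "decr k (set u) (L1 @ L2)" "incr k (set u) (Y1 @ Y2)"
    "\<forall>x\<in>set L1 \<union> set Y2. rk k (set u) c < rk k (set u) x"
    "\<forall>x\<in>set L2 \<union> set Y1. rk k (set u) x < rk k (set u) c"
proof -
  let ?r = "rk k (set u)"
  define xs where "xs = take (Suc p) u"
  define ys where "ys = drop (Suc p) u"
  define L1 where "L1 = filter (\<lambda>x. ?r c < ?r x) xs"
  define L2 where "L2 = filter (\<lambda>x. ?r x < ?r c) xs"
  define Y1 where "Y1 = filter (\<lambda>x. ?r x < ?r c) ys"
  define Y2 where "Y2 = filter (\<lambda>x. ?r c < ?r x) ys"
  note sides = Ushape_sides[OF U, folded xs_def ys_def]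
  have "\<forall>x\<in>set u. x \<noteq> c \<longrightarrow> ?r x \<noteq> ?r c"
    using rk_inj[OF g] g c(1) unfolding proper_set_def by (metis atLeastAtMost_iff subsetD)
  then have "\<forall>x\<in>set xs. x \<noteq> c \<longrightarrow> ?r x \<noteq> ?r c" "\<forall>x\<in>set ys. x \<noteq> c \<longrightarrow> ?r x \<noteq> ?r c"
    unfolding xs_def ys_def by (auto dest: in_set_takeD in_set_dropD)
  note splits = decr_split[OF sides(1) this(1), folded L1_def L2_def]
    incr_split[OF sides(2) this(2), folded Y1_def Y2_def]
  have valley: "?r (u ! p) < ?r c" using Ushape_valley_min[OF U c] .
  obtain B where "xs = B @ [u ! p]" using sides(3,6) by (metis append_butlast_last_id)
  then have L2: "L2 \<noteq> []" "last L2 = u ! p" unfolding L2_def using valley by simp_all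
  obtain T where "ys = u ! p # T" using sides(4,7) by (metis list.collapse)
  then have Y1: "Y1 \<noteq> []" "hd Y1 = u ! p" unfolding Y1_def using valley by simp_all
  have "decr k (set u) (L1 @ filter (\<lambda>x. x = c) xs @ L2)"
    using sides(1) by (simp only: splits(1)[symmetric])
  then have "decr k (set u) (L1 @ L2)" unfolding decr_def by (simp add: sorted_wrt_append)
  moreover have "incr k (set u) (Y1 @ filter (\<lambda>x. x = c) ys @ Y2)"
    using sides(2) by (simp only: splits(2)[symmetric])
  then have "incr k (set u) (Y1 @ Y2)" unfolding incr_def by (simp add: sorted_wrt_append)
  moreover have "\<forall>x\<in>set L1 \<union> set Y2. ?r c < ?r x" "\<forall>x\<in>set L2 \<union> set Y1. ?r x < ?r c"
    unfolding L1_def L2_def Y1_def Y2_def by auto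
  ultimately show ?thesis
    using that[OF splits(1)[unfolded xs_def] splits(2)[unfolded ys_def]] L2 Y1 by simp
qed

lemma count_list_distinct: "distinct xs \<Longrightarrow> count_list xs c = (if c \<in> set xs then 1 else 0)"
  by (induction xs) auto

lemma count_list_Ushape:
  assumes "Ushape k u p"
  shows "count_list u c = (if c \<in> set (take (Suc p) u) then 1 else 0)
                         + (if c \<in> set (drop (Suc p) u) then 1 else 0)"
proof -
  have "distinct (take (Suc p) u)" "distinct (drop (Suc p) u)"
    using Ushape_sides[OF assms] decr_distinct incr_distinct by auto
  then show ?thesis
    using count_list_append[of "take (Suc p) u" "drop (Suc p) u" c]
    by (simp add: count_list_distinct)
qed

lemma Ushape_split_single:
  assumes U: "Ushape k u p" and g: "proper_set k (set u)" and c: "count_list u c = 1"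
  obtains L1 L2 Y1 Y2 where
    "c \<in> set (take (Suc p) u) \<and> u = L1 @ [c] @ L2 @ Y1 @ Y2 \<and> length (L1 @ L2) = p \<or>
     c \<notin> set (take (Suc p) u) \<and> u = L1 @ L2 @ Y1 @ [c] @ Y2 \<and> length (L1 @ L2) = Suc p"
    "L2 \<noteq> []" "Y1 \<noteq> []" "last L2 = hd Y1"
    "decr k (set u) (L1 @ L2)" "incr k (set u) (Y1 @ Y2)"
    "\<forall>x\<in>set L1 \<union> set Y2. rk k (set u) c < rk k (set u) x"
    "\<forall>x\<in>set L2 \<union> set Y1. rk k (set u) x < rk k (set u) c"
proof -
  note sides = Ushape_sides[OF U]
  have "c \<in> set u" using c by (metis count_notin zero_neq_one)
  moreover have "u ! p \<in> set (take (Suc p) u)" "u ! p \<in> set (drop (Suc p) u)"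
    using sides(3,4,6,7) by (metis last_in_set, metis list.set_sel(1))
  then have "count_list u (u ! p) = 2" using count_list_Ushape[OF U] by simp
  then have "c \<noteq> u ! p" using c by auto
  ultimately obtain L1 L2 Y1 Y2 where split:
    "take (Suc p) u = L1 @ filter (\<lambda>x. x = c) (take (Suc p) u) @ L2"
    "drop (Suc p) u = Y1 @ filter (\<lambda>x. x = c) (drop (Suc p) u) @ Y2"
    "L2 \<noteq> []" "Y1 \<noteq> []" "last L2 = hd Y1"
    "decr k (set u) (L1 @ L2)" "incr k (set u) (Y1 @ Y2)"
    "\<forall>x\<in>set L1 \<union> set Y2. rk k (set u) c < rk k (set u) x"
    "\<forall>x\<in>set L2 \<union> set Y1. rk k (set u) x < rk k (set u) c"
    using Ushape_split_around[OF U g] by blast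
  have dist: "distinct (take (Suc p) u)" "distinct (drop (Suc p) u)"
    using sides decr_distinct incr_distinct by auto
  have "c \<in> set (take (Suc p) u) \<and> u = L1 @ [c] @ L2 @ Y1 @ Y2 \<and> length (L1 @ L2) = p \<or>
     c \<notin> set (take (Suc p) u) \<and> u = L1 @ L2 @ Y1 @ [c] @ Y2 \<and> length (L1 @ L2) = Suc p"
  proof (cases "c \<in> set (take (Suc p) u)")
    case True
    then have "c \<notin> set (drop (Suc p) u)"
      using c unfolding count_list_Ushape[OF U, of c] by (simp split: if_splits)
    note td = split(1,2)[unfolded distinct_filter_eq[OF dist(1)] distinct_filter_eq[OF dist(2)]
        if_P[OF True] if_not_P[OF this] append.left_neutral]
    have "u = L1 @ [c] @ L2 @ Y1 @ Y2" using append_take_drop_id[of "Suc p" u, unfolded td] by simp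
    moreover have "length (L1 @ L2) = p" using sides(5)[unfolded td] by simp
    ultimately show ?thesis using True by blast
  next
    case False
    then have "c \<in> set (drop (Suc p) u)"
      using c unfolding count_list_Ushape[OF U, of c] by (simp split: if_splits)
    note td = split(1,2)[unfolded distinct_filter_eq[OF dist(1)] distinct_filter_eq[OF dist(2)]
        if_not_P[OF False] if_P[OF this] append.left_neutral]
    have "u = L1 @ L2 @ Y1 @ [c] @ Y2" using append_take_drop_id[of "Suc p" u, unfolded td] by simp
    moreover have "length (L1 @ L2) = Suc p" using sides(5)[unfolded td] by simp
    ultimately show ?thesis using False by blast
  qed
  with split(3-9) show ?thesis using that by blast
qed

section \<open>Moving \<open>u\<^sub>m\<^sub>i\<^sub>n\<close> to the left side\<close>

definition Unwcright :: "nat \<Rightarrow> nat \<Rightarrow> int \<Rightarrow> nat list set" where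
  "Unwcright k r t = {u \<in> Uset k r t. \<not> wconn k u} - Unwcleft k r t"

definition move_umin_left :: "nat \<Rightarrow> nat \<Rightarrow> nat list \<Rightarrow> nat list" where
  "move_umin_left k a u = (let S = set u; c = the_umin k u in
     filter (\<lambda>x. rk k S c < rk k S x) (take a u) @ [c] @ filter (\<lambda>x. rk k S x < rk k S c) (take a u)
     @ filter (\<lambda>x. x \<noteq> c) (drop a u))"

definition move_umin_right :: "nat \<Rightarrow> nat \<Rightarrow> nat list \<Rightarrow> nat list" where
  "move_umin_right k a v = (let S = set v; c = the_umin k v in
     filter (\<lambda>x. x \<noteq> c) (take (Suc a) v) @ filter (\<lambda>x. rk k S x < rk k S c) (drop (Suc a) v) @ [c]
     @ filter (\<lambda>x. rk k S c < rk k S x) (drop (Suc a) v))"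

text \<open>The U-word \<open>L1 @ L2 @ Y1 @ [c] @ Y2\<close> has left side \<open>L1 @ L2\<close> and right side
  \<open>Y1 @ [c] @ Y2\<close>, with \<open>c = u\<^sub>m\<^sub>i\<^sub>n\<close> and \<open>L2\<close>, \<open>Y1\<close> the letters below \<open>c\<close>; moving \<open>c\<close> between
  \<open>L1\<close> and \<open>L2\<close> gives the corresponding word with \<open>u\<^sub>m\<^sub>i\<^sub>n\<close> on the left side.\<close>

locale umin_transfer =
  fixes k r :: nat and L1 L2 Y1 Y2 :: "nat list" and c :: nat
  assumes letters: "set (L1 @ L2 @ Y1 @ [c] @ Y2) \<subseteq> {0..k}"
    and word_length: "length (L1 @ L2 @ Y1 @ [c] @ Y2) = r" and r_le_k: "r \<le> k"
    and umin: "umin k (L1 @ L2 @ Y1 @ [c] @ Y2) c"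
    and not_wconn: "\<not> wconn k (L1 @ L2 @ Y1 @ [c] @ Y2)"
    and decr: "decr k (set (L1 @ L2 @ Y1 @ [c] @ Y2)) (L1 @ L2)"
    and incr: "incr k (set (L1 @ L2 @ Y1 @ [c] @ Y2)) (Y1 @ Y2)"
    and above: "\<forall>x\<in>set L1 \<union> set Y2.
      rk k (set (L1 @ L2 @ Y1 @ [c] @ Y2)) c < rk k (set (L1 @ L2 @ Y1 @ [c] @ Y2)) x"
    and below: "\<forall>x\<in>set L2 \<union> set Y1.
      rk k (set (L1 @ L2 @ Y1 @ [c] @ Y2)) x < rk k (set (L1 @ L2 @ Y1 @ [c] @ Y2)) c"
    and nonempty: "L2 \<noteq> []" "Y1 \<noteq> []"
    and valley: "last L2 = hd Y1"
begin

abbreviation right_word :: "nat list" where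
  "right_word \<equiv> L1 @ L2 @ Y1 @ [c] @ Y2"

abbreviation left_word :: "nat list" where
  "left_word \<equiv> L1 @ [c] @ L2 @ Y1 @ Y2"

abbreviation rank :: "nat \<Rightarrow> nat" where
  "rank \<equiv> rk k (set right_word)"

lemma set_left_word: "set left_word = set right_word"
  by auto

lemma proper: "proper_set k (set right_word)"
  using proper_set_word[OF letters] word_length r_le_k by simp

lemma c_notin: "c \<notin> set L1" "c \<notin> set L2" "c \<notin> set Y1" "c \<notin> set Y2"
  using above below by auto

lemma rank_filters:
  "filter (\<lambda>x. rank c < rank x) L1 = L1" "filter (\<lambda>x. rank x < rank c) L1 = []"
  "filter (\<lambda>x. rank c < rank x) L2 = []" "filter (\<lambda>x. rank x < rank c) L2 = L2"
  "filter (\<lambda>x. rank c < rank x) Y1 = []" "filter (\<lambda>x. rank x < rank c) Y1 = Y1"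
  "filter (\<lambda>x. rank c < rank x) Y2 = Y2" "filter (\<lambda>x. rank x < rank c) Y2 = []"
  using above below by (auto intro!: filter_True filter_False dest: less_asym)

lemma c_filters:
  "filter (\<lambda>x. x \<noteq> c) L1 = L1" "filter (\<lambda>x. x \<noteq> c) L2 = L2"
  "filter (\<lambda>x. x \<noteq> c) Y1 = Y1" "filter (\<lambda>x. x \<noteq> c) Y2 = Y2"
  using c_notin by (auto intro!: filter_True)

lemma the_umin: "the_umin k right_word = c" "the_umin k left_word = c"
  using the_umin_eq[OF proper umin] the_umin_eq[of k left_word c] proper umin
    umin_cong[OF set_left_word] by simp_all

lemma right_word_Ushape:
  "Ushape k right_word (length (L1 @ L2) - 1)" "isU k right_word"
  "asc k right_word = length Y1 + length Y2"
proof -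
  have "incr k (set right_word) (Y1 @ [c] @ Y2)"
    using incr above below unfolding incr_def by (auto simp: sorted_wrt_append)
  then show "Ushape k right_word (length (L1 @ L2) - 1)" "isU k right_word"
    "asc k right_word = length Y1 + length Y2"
    using Ushape_append[of "L1 @ L2" "Y1 @ [c] @ Y2" k]
      letters word_length r_le_k decr nonempty valley
    by simp_all
qed

lemma left_word_Ushape:
  "Ushape k left_word (length (L1 @ L2))" "isU k left_word"
  "asc k left_word = length Y1 + length Y2 - 1"
proof -
  have "decr k (set right_word) (L1 @ [c] @ L2)"
    using decr above below unfolding decr_def by (auto simp: sorted_wrt_append)
  then show "Ushape k left_word (length (L1 @ L2))" "isU k left_word"
    "asc k left_word = length Y1 + length Y2 - 1"
    using Ushape_append[of "L1 @ [c] @ L2" "Y1 @ Y2" k]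
      letters word_length r_le_k incr nonempty valley
      set_left_word
    by simp_all
qed

lemma right_word_in_Unwcright: "right_word \<in> Unwcright k r (int (length Y1 + length Y2))"
  unfolding Unwcright_def
proof
  show "right_word \<in> {u \<in> Uset k r (int (length Y1 + length Y2)). \<not> wconn k u}"
    using right_word_Ushape word_length not_wconn unfolding Uset_def by simp
  show "right_word \<notin> Unwcleft k r (int (length Y1 + length Y2))"
  proof
    assume "right_word \<in> Unwcleft k r (int (length Y1 + length Y2))"
    then obtain c' p where "umin k right_word c'" "Ushape k right_word p"
      "c' \<in> set (take (Suc p) right_word)"
      unfolding Unwcleft_def by blast
    moreover have "c' = c" using umin_unique[OF proper] umin calculation(1) by blast
    moreover have "p = length (L1 @ L2) - 1"
      using Ushape_unique right_word_Ushape(1) calculation(2) by blast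
    ultimately show False using c_notin nonempty by simp
  qed
qed

lemma left_word_in_Unwcleft: "left_word \<in> Unwcleft k r (int (length Y1 + length Y2) - 1)"
  unfolding Unwcleft_def Uset_def
proof (intro CollectI conjI exI)
  show "isU k left_word" "length left_word = r"
    using left_word_Ushape(2) word_length by simp_all
  have "1 \<le> length Y1 + length Y2" using nonempty(2) by (cases Y1) auto
  then show "int (asc k left_word) = int (length Y1 + length Y2) - 1"
    using left_word_Ushape(3) by (simp add: of_nat_diff)
  show "\<not> wconn k left_word" using not_wconn wconn_cong[OF set_left_word] by simp
  show "umin k left_word c" using umin umin_cong[OF set_left_word] by simp
  show "count_list left_word c = 1" using c_notin by simp
  show "Ushape k left_word (length (L1 @ L2))" by (rule left_word_Ushape)
  show "c \<in> set (take (Suc (length (L1 @ L2))) left_word)" by simp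
qed

lemma move_umin_left_right_word: "move_umin_left k (length (L1 @ L2)) right_word = left_word"
proof -
  have td: "take (length (L1 @ L2)) right_word = L1 @ L2"
    "drop (length (L1 @ L2)) right_word = Y1 @ [c] @ Y2" by simp_all
  show ?thesis
    unfolding move_umin_left_def Let_def the_umin td filter_append rank_filters c_filters by simp
qed

lemma move_umin_right_left_word: "move_umin_right k (length (L1 @ L2)) left_word = right_word"
proof -
  have td: "take (Suc (length (L1 @ L2))) left_word = L1 @ [c] @ L2"
    "drop (Suc (length (L1 @ L2))) left_word = Y1 @ Y2" by simp_all
  show ?thesis
    unfolding move_umin_right_def Let_def the_umin set_left_word td filter_append rank_filters
      c_filters
    by simp
qed

lemma rel_conv_right_left: "rel_conv k right_word left_word"
proof -
  have "\<forall>x\<in>set (L2 @ Y1). x \<le> k \<and> \<not> cadj k x c"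
    using gapletter_not_cadj[OF proper] umin below letters unfolding umin_def by auto
  then have "rel_conv k (L1 @ ((L2 @ Y1) @ [c]) @ Y2) (L1 @ (c # L2 @ Y1) @ Y2)"
    using letters by (intro rel_conv_append rel_conv_commute) auto
  then show ?thesis by simp
qed

end

lemma Unwcright_decompose:
  assumes "u \<in> Unwcright k r (int n)" "r \<le> k"
  obtains L1 L2 Y1 Y2 c where "umin_transfer k r L1 L2 Y1 Y2 c" "u = L1 @ L2 @ Y1 @ [c] @ Y2"
    "length (L1 @ L2) = r - 1 - n" "length Y1 + length Y2 = n"
proof -
  from assms(1) have u: "isU k u" "length u = r" "asc k u = n" "\<not> wconn k u"
    and not_left: "\<not> (\<exists>c. umin k u c \<and> count_list u c = 1 \<and>
      (\<exists>p. Ushape k u p \<and> c \<in> set (take (Suc p) u)))"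
    unfolding Unwcright_def Unwcleft_def Uset_def by auto
  obtain p where U: "Ushape k u p" using u(1) unfolding isU_def by blast
  have letters: "set u \<subseteq> {0..k}" using u(1) unfolding isU_def properword_def by blast
  have g: "proper_set k (set u)" using u(1) properword_proper_set unfolding isU_def by blast
  obtain c where c: "umin k u c" using umin_exists[OF g] u(4) unfolding wconn_def by blast
  have "c \<in> set u" using c unfolding umin_def gapletter_def by blast
  then have "count_list u c \<noteq> 0" by (simp add: count_list_0_iff)
  moreover have "count_list u c \<noteq> 2" using u(4) c unfolding wconn_def by blast
  ultimately have once: "count_list u c = 1"
    unfolding count_list_Ushape[OF U] by (simp split: if_splits)
  obtain L1 L2 Y1 Y2 where
    "c \<in> set (take (Suc p) u) \<and> u = L1 @ [c] @ L2 @ Y1 @ Y2 \<and> length (L1 @ L2) = p \<or>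
     c \<notin> set (take (Suc p) u) \<and> u = L1 @ L2 @ Y1 @ [c] @ Y2 \<and> length (L1 @ L2) = Suc p"
    and split: "L2 \<noteq> []" "Y1 \<noteq> []" "last L2 = hd Y1"
    "decr k (set u) (L1 @ L2)" "incr k (set u) (Y1 @ Y2)"
    "\<forall>x\<in>set L1 \<union> set Y2. rk k (set u) c < rk k (set u) x"
    "\<forall>x\<in>set L2 \<union> set Y1. rk k (set u) x < rk k (set u) c"
    using Ushape_split_single[OF U g once] by blast
  then have u_eq: "u = L1 @ L2 @ Y1 @ [c] @ Y2" and len: "length (L1 @ L2) = Suc p"
    using not_left c once U by blast+
  show ?thesis
  proof (rule that)
    show "umin_transfer k r L1 L2 Y1 Y2 c"
      by (unfold_locales, fold u_eq) (use letters u(2,4) assms(2) c split in simp_all)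
    show "u = L1 @ L2 @ Y1 @ [c] @ Y2" by (fact u_eq)
    show "length (L1 @ L2) = r - 1 - n" "length Y1 + length Y2 = n"
      using len asc_Ushape[OF U] u(2,3) arg_cong[OF u_eq, of length] by simp_all
  qed
qed

lemma Unwcleft_decompose:
  assumes "v \<in> Unwcleft k r (int n - 1)" "r \<le> k"
  obtains L1 L2 Y1 Y2 c where "umin_transfer k r L1 L2 Y1 Y2 c" "v = L1 @ [c] @ L2 @ Y1 @ Y2"
    "length (L1 @ L2) = r - 1 - n" "length Y1 + length Y2 = n"
proof -
  from assms(1) obtain c p
    where v: "isU k v" "length v = r" "int (asc k v) = int n - 1" "\<not> wconn k v"
    and c: "umin k v c" and once: "count_list v c = 1" and U: "Ushape k v p"
    and c_left: "c \<in> set (take (Suc p) v)"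
    unfolding Unwcleft_def Uset_def by auto
  have letters: "set v \<subseteq> {0..k}" using v(1) unfolding isU_def properword_def by blast
  have g: "proper_set k (set v)" using v(1) properword_proper_set unfolding isU_def by blast
  obtain L1 L2 Y1 Y2 where
    "c \<in> set (take (Suc p) v) \<and> v = L1 @ [c] @ L2 @ Y1 @ Y2 \<and> length (L1 @ L2) = p \<or>
     c \<notin> set (take (Suc p) v) \<and> v = L1 @ L2 @ Y1 @ [c] @ Y2 \<and> length (L1 @ L2) = Suc p"
    and split: "L2 \<noteq> []" "Y1 \<noteq> []" "last L2 = hd Y1"
    "decr k (set v) (L1 @ L2)" "incr k (set v) (Y1 @ Y2)"
    "\<forall>x\<in>set L1 \<union> set Y2. rk k (set v) c < rk k (set v) x"
    "\<forall>x\<in>set L2 \<union> set Y1. rk k (set v) x < rk k (set v) c"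
    using Ushape_split_single[OF U g once] by blast
  then have v_eq: "v = L1 @ [c] @ L2 @ Y1 @ Y2" and len: "length (L1 @ L2) = p"
    using c_left by blast+
  let ?u = "L1 @ L2 @ Y1 @ [c] @ Y2"
  have same_set: "set ?u = set v" and same_count: "\<And>x. count_list ?u x = count_list v x"
    and same_length: "length ?u = length v"
    unfolding v_eq by auto
  show ?thesis
  proof (rule that)
    show "umin_transfer k r L1 L2 Y1 Y2 c"
      by (unfold_locales, unfold same_set same_length umin_cong[OF same_set]
          wconn_cong[OF same_set same_count])
        (use letters v(2,4) assms(2) c split in simp_all)
    show "v = L1 @ [c] @ L2 @ Y1 @ Y2" by (fact v_eq)
    have "Suc p < r" using U v(2) unfolding Ushape_def by simp
    then show "length (L1 @ L2) = r - 1 - n" "length Y1 + length Y2 = n"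
      using len asc_Ushape[OF U] v(2,3) arg_cong[OF v_eq, of length] by simp_all
  qed
qed

lemma Unwcright_move_umin_left:
  assumes "u \<in> Unwcright k r (int n)" "r \<le> k"
  shows "move_umin_left k (r - 1 - n) u \<in> Unwcleft k r (int n - 1)"
    "move_umin_right k (r - 1 - n) (move_umin_left k (r - 1 - n) u) = u"
    "rel_conv k u (move_umin_left k (r - 1 - n) u)"
proof -
  obtain L1 L2 Y1 Y2 c where "umin_transfer k r L1 L2 Y1 Y2 c" and u: "u = L1 @ L2 @ Y1 @ [c] @ Y2"
    and a: "length (L1 @ L2) = r - 1 - n" and n: "length Y1 + length Y2 = n"
    using Unwcright_decompose[OF assms] .
  then interpret umin_transfer k r L1 L2 Y1 Y2 c by simp
  show "move_umin_left k (r - 1 - n) u \<in> Unwcleft k r (int n - 1)"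
    "move_umin_right k (r - 1 - n) (move_umin_left k (r - 1 - n) u) = u"
    "rel_conv k u (move_umin_left k (r - 1 - n) u)"
    unfolding u a[symmetric] move_umin_left_right_word move_umin_right_left_word
    using left_word_in_Unwcleft rel_conv_right_left n by simp_all
qed

lemma Unwcleft_move_umin_right:
  assumes "v \<in> Unwcleft k r (int n - 1)" "r \<le> k"
  shows "move_umin_right k (r - 1 - n) v \<in> Unwcright k r (int n)"
    "move_umin_left k (r - 1 - n) (move_umin_right k (r - 1 - n) v) = v"
proof -
  obtain L1 L2 Y1 Y2 c where "umin_transfer k r L1 L2 Y1 Y2 c" and v: "v = L1 @ [c] @ L2 @ Y1 @ Y2"
    and a: "length (L1 @ L2) = r - 1 - n" and n: "length Y1 + length Y2 = n"
    using Unwcleft_decompose[OF assms] .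
  then interpret umin_transfer k r L1 L2 Y1 Y2 c by simp
  show "move_umin_right k (r - 1 - n) v \<in> Unwcright k r (int n)"
    "move_umin_left k (r - 1 - n) (move_umin_right k (r - 1 - n) v) = v"
    unfolding v a[symmetric] move_umin_left_right_word move_umin_right_left_word
    using right_word_in_Unwcright n by simp_all
qed

lemma finite_Uset: "finite (Uset k r t)"
  by (rule finite_subset[of _ "{xs. set xs \<subseteq> {0..k} \<and> length xs = r}"])
    (auto simp: Uset_def isU_def properword_def finite_lists_length_eq)

lemma Aeq_Unwcright_Unwcleft:
  assumes "r \<le> k" shows "Aeq k (Ind (Unwcright k r t)) (Ind (Unwcleft k r (t - 1)))"
proof (cases "t < 0")
  case True
  then have "Unwcright k r t = {}" "Unwcleft k r (t - 1) = {}"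
    unfolding Unwcright_def Unwcleft_def Uset_def by auto
  then show ?thesis by (simp add: Aeq_refl)
next
  case False
  then obtain n where t: "t = int n" by (metis nonneg_int_cases not_less)
  let ?f = "move_umin_left k (r - 1 - n)"
  have fin: "finite (Unwcright k r t)" "finite (Unwcleft k r (t - 1))"
    using finite_Uset unfolding Unwcright_def Unwcleft_def by (auto intro: finite_subset[rotated])
  have "bij_betw ?f (Unwcright k r t) (Unwcleft k r (t - 1))"
    by (rule bij_betw_byWitness[where f' = "move_umin_right k (r - 1 - n)"])
      (use Unwcright_move_umin_left[OF _ assms] Unwcleft_move_umin_right[OF _ assms] t in auto)
  then have "(\<lambda>w. \<Sum>u\<in>Unwcright k r t. wd (?f u) w) = Ind (Unwcleft k r (t - 1))"
    unfolding Ind_eq_sum_wd[OF fin(2)] by (intro ext sum.reindex_bij_betw)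
  moreover have "Aeq k (\<lambda>w. \<Sum>u\<in>Unwcright k r t. wd u w) (\<lambda>w. \<Sum>u\<in>Unwcright k r t. wd (?f u) w)"
    using Unwcright_move_umin_left(3)[OF _ assms] fin(1) t by (intro Aeq_sum rel_conv_Aeq) auto
  ultimately show ?thesis unfolding Ind_eq_sum_wd[OF fin(1)] by simp
qed

lemma Uset_Aeq:
  assumes "r \<le> k"
  shows "Aeq k (Ind (Uset k r t))
           (\<lambda>w. Ind (Uwc k r t) w + Ind (Unwcleft k r t) w + Ind (Unwcleft k r (t - 1)) w)"
proof -
  have "Ind (Uset k r t) w = Ind (Uwc k r t) w + Ind (Unwcleft k r t) w + Ind (Unwcright k r t) w"
    for w unfolding Ind_def Uwc_def Unwcright_def Unwcleft_def by auto
  then show ?thesis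
    using Aeq_add[OF Aeq_refl Aeq_Unwcright_Unwcleft[OF assms, of t]] by presburger
qed

lemma sum_Uset_Aeq:
  assumes "r \<le> k"
  shows "Aeq k (\<lambda>w. \<Sum>j<i. (-1) ^ j * Ind (Uset k r (int i - int j - 1)) w)
           (\<lambda>w. (\<Sum>j<i. (-1) ^ j * Ind (Uwc k r (int i - int j - 1)) w)
              + Ind (Unwcleft k r (int i - 1)) w)"
proof -
  let ?L = "\<lambda>j w. Ind (Unwcleft k r (int i - int j - 1)) w"
  have "Aeq k (\<lambda>w. (-1) ^ j * Ind (Uset k r (int i - int j - 1)) w)
     (\<lambda>w. (-1) ^ j * (Ind (Uwc k r (int i - int j - 1)) w + (?L j w + ?L (Suc j) w)))" for j
    using Aeq_smult[OF Uset_Aeq[OF assms, of "int i - int j - 1"], of "(-1) ^ j"]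
    by (simp add: algebra_simps)
  then have "Aeq k (\<lambda>w. \<Sum>j<i. (-1) ^ j * Ind (Uset k r (int i - int j - 1)) w)
     (\<lambda>w. \<Sum>j<i. (-1) ^ j * (Ind (Uwc k r (int i - int j - 1)) w + (?L j w + ?L (Suc j) w)))"
    by (intro Aeq_sum) simp_all
  moreover have "(\<Sum>j<i. (-1) ^ j * (Ind (Uwc k r (int i - int j - 1)) w + (?L j w + ?L (Suc j) w)))
      = (\<Sum>j<i. (-1) ^ j * Ind (Uwc k r (int i - int j - 1)) w) + Ind (Unwcleft k r (int i - 1)) w"
    for w
  proof -
    have "(\<Sum>j<i. (-1) ^ j * (?L j w + ?L (Suc j) w)) = ?L 0 w - (-1) ^ i * ?L i w"
      by (rule sum_alternating_telescope)
    also have "\<dots> = Ind (Unwcleft k r (int i - 1)) w"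
      by (simp add: Ind_def Unwcleft_def Uset_def)
    finally show ?thesis by (simp add: ring_distribs sum.distrib)
  qed
  ultimately show ?thesis by simp
qed

theorem lemma7p5:
  fixes k r i :: nat
  assumes "i \<le> r" and "r \<le> k"
  shows "Aeq k (shook k r i)
           (\<lambda>w. Ind (Vset k r (int i)) w
               + (\<Sum>j<i. (-1) ^ j * Ind (Uwc k r (int i - int j - 1)) w)
               + Ind (Unwcleft k r (int i - 1)) w)"
  using Aeq_trans[OF shook_Aeq_Uset_sum[OF assms] Aeq_add[OF Aeq_refl sum_Uset_Aeq[OF assms(2)]]]
  by (simp add: add.assoc)

end
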